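(* Let $\mu_X\in\mathbb R$, $\sigma_X>0$, $R,R_c\ge0$, $P\ge0$. For any distribution $p_{\hat X}$ on $\mathbb R$ with finite second moment and mean $\mu_{\hat X}$ such that $W_2^2(\mathcal N(\mu_X,\sigma_X^2),p_{\hat X})\le P$ (which implies $P\ge(\mu_X-\mu_{\hat X})^2$), we have $$D(R+R_c|p_{\hat X})\ge\Big(\big(\sigma_Xe^{-(R+R_c)}-\sqrt{P-(\mu_X-\mu_{\hat X})^2}\big)_+\Big)^2.$$
   Context: All logarithms are natural; $(a)_+:=\max\{a,0\}$. $W_2^2(p,q):=\inf_{\pi\in\Pi(p,q)}\mathbb E_\pi[(A-B)^2]$, where $\Pi(p,q)$ is the set of couplings of $p$ and $q$. For a distribution $p$ of a real random variable $Z$ with finite second moment and $r\ge0$, $D(r|p):=\min_{p_{V|Z}:\,I(Z;V)\le r}\mathbb E[(Z-V)^2]$ (quadratic distortion-rate function). *)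

theory Defs
  imports "HOL-Probability.Probability"
begin

definition real_distr :: "real measure \<Rightarrow> bool" where
  "real_distr p \<longleftrightarrow> prob_space p \<and> sets p = sets borel"

definition joint_distr :: "(real \<times> real) measure \<Rightarrow> bool" where
  "joint_distr \<pi> \<longleftrightarrow> prob_space \<pi> \<and> sets \<pi> = sets (borel \<Otimes>\<^sub>M borel)"

definition couplings :: "real measure \<Rightarrow> real measure \<Rightarrow> (real \<times> real) measure set" where
  "couplings p q = {\<pi>. joint_distr \<pi> \<and> distr \<pi> borel fst = p \<and> distr \<pi> borel snd = q}"

definition W2sq :: "real measure \<Rightarrow> real measure \<Rightarrow> real" where
  "W2sq p q = (INF \<pi>\<in>couplings p q. \<integral>x. (fst x - snd x)\<^sup>2 \<partial>\<pi>)"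

definition mutual_info :: "(real \<times> real) measure \<Rightarrow> ereal" where
  "mutual_info \<pi> =
    (let \<nu> = distr \<pi> borel fst \<Otimes>\<^sub>M distr \<pi> borel snd;
         f = (\<lambda>x. ln (enn2real (RN_deriv \<nu> \<pi> x)))
     in if absolutely_continuous \<nu> \<pi> \<and> integrable \<pi> f
        then ereal (\<integral>x. f x \<partial>\<pi>) else \<infinity>)"

text \<open>Quadratic distortion-rate function D(r|p): infimum of E[(Z-V)^2] over joint laws of
  (Z,V) with Z ~ p and I(Z;V) \<le> r (equivalently over channels p_{V|Z}).\<close>
definition distortion_rate :: "real \<Rightarrow> real measure \<Rightarrow> real" where
  "distortion_rate r p = Inf {\<integral>x. (fst x - snd x)\<^sup>2 \<partial>\<pi> | \<pi>.
      joint_distr \<pi> \<and> distr \<pi> borel fst = p \<and> mutual_info \<pi> \<le> ereal r \<and>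
      integrable \<pi> (\<lambda>x. (fst x - snd x)\<^sup>2)}"

definition gaussian :: "real \<Rightarrow> real \<Rightarrow> real measure" where
  "gaussian \<mu> \<sigma> = density lborel (normal_density \<mu> \<sigma>)"

end

theory Submission
  imports Defs
begin

text \<open>
  Let \<open>Y \<sim> p\<close> and \<open>U\<close> uniform on \<open>[0,1]\<close> and independent of \<open>Y\<close>. The randomized
  distributional transform \<open>W(Y,U) = F(Y-) + U (F(Y) - F(Y-))\<close> is uniform, so
  \<open>X = \<Phi>\<^sup>-\<^sup>1(W(Y,U))\<close> is \<open>\<N>(\<mu>,\<sigma>\<^sup>2)\<close>-distributed and comonotone with \<open>Y\<close>.
  Writing \<open>(a - b)\<^sup>2\<close> as the Lebesgue measure of the square spanned by \<open>a\<close> and \<open>b\<close>, the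
  Frechet bounds show that this comonotone coupling minimises \<open>E (X - Y)\<^sup>2\<close> among all
  couplings, so \<open>E (X - Y)\<^sup>2 \<le> P\<close> and, after centering, \<open>E (X - c - Y)\<^sup>2 \<le> P - c\<^sup>2\<close>
  with \<open>c = \<mu> - E Y\<close>.

  Now let \<open>(Y, V)\<close> have \<open>I(Y;V) \<le> r\<close>. Since \<open>X\<close> is obtained from \<open>Y\<close> and independent noise,
  the Donsker--Varadhan inequality for the density of \<open>(Y,V,U)\<close> relative to
  \<open>p \<otimes> q \<otimes> U\<close>, tested against the log-likelihood ratio of \<open>\<N>(c + V, D)\<close> and
  \<open>\<N>(\<mu>, \<sigma>\<^sup>2)\<close> with \<open>D = \<sigma>\<^sup>2 e\<^sup>-\<^sup>2\<^sup>r\<close>, gives \<open>E (X - c - V)\<^sup>2 \<ge> D\<close>. Minkowski's inequality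
  in \<open>L\<^sup>2\<close> then yields \<open>\<sigma> e\<^sup>-\<^sup>r \<le> \<surd>(P - c\<^sup>2) + \<surd>(E (Y - V)\<^sup>2)\<close>.
\<close>

section \<open>Square-integrable functions\<close>

lemma square_lincomb_le: "(a * u + b * v + c)\<^sup>2 \<le> 3 * ((a * u)\<^sup>2 + (b * v)\<^sup>2 + c\<^sup>2)"
  for a b c u v :: real
proof -
  have "0 \<le> (a * u - b * v)\<^sup>2 + (a * u - c)\<^sup>2 + (b * v - c)\<^sup>2" by simp
  thus ?thesis by (simp add: power2_eq_square algebra_simps)
qed

lemma square_add_le_weighted: "w > 0 \<Longrightarrow> (u + v)\<^sup>2 \<le> (1 + w) * u\<^sup>2 + (1 + 1/w) * v\<^sup>2"
  for u v w :: real
proof -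
  assume w: "w > 0"
  have "0 \<le> (w * u - v)\<^sup>2 / w" using w by simp
  also have "(w * u - v)\<^sup>2 / w = w * u\<^sup>2 - 2 * u * v + v\<^sup>2 / w"
    using w by (simp add: power2_eq_square field_simps)
  finally have "2 * u * v \<le> w * u\<^sup>2 + v\<^sup>2 / w" by simp
  thus ?thesis by (simp add: power2_eq_square algebra_simps)
qed

text \<open>The choice \<open>w = (b + \<delta>) / (s + \<delta>)\<close> nearly balances the two terms.\<close>
lemma le_add_of_weighted_square_bounds:
  fixes s b k :: real
  assumes s: "0 \<le> s" and b: "0 \<le> b"
    and H: "\<And>w. w > 0 \<Longrightarrow> k\<^sup>2 \<le> (1 + w) * s\<^sup>2 + (1 + 1/w) * b\<^sup>2"
  shows "k \<le> s + b"
proof (rule field_le_epsilon)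
  fix \<epsilon> :: real assume \<epsilon>: "0 < \<epsilon>"
  define \<delta> where "\<delta> = \<epsilon> / 2"
  define T where "T = s + b + 2 * \<delta>"
  have \<delta>: "\<delta> > 0" using \<epsilon> by (simp add: \<delta>_def)
  have sd: "s + \<delta> > 0" and bd: "b + \<delta> > 0" and T: "0 \<le> T"
    using s b \<delta> by (auto simp: T_def)
  have "T / (s + \<delta>) = (s + \<delta>) / (s + \<delta>) + (b + \<delta>) / (s + \<delta>)"
    and "T / (b + \<delta>) = (b + \<delta>) / (b + \<delta>) + (s + \<delta>) / (b + \<delta>)"
    unfolding add_divide_distrib[symmetric] by (simp_all add: T_def)
  hence e1: "1 + (b + \<delta>) / (s + \<delta>) = T / (s + \<delta>)"
    and e2: "1 + 1 / ((b + \<delta>) / (s + \<delta>)) = T / (b + \<delta>)"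
    using sd bd by simp_all
  have q1: "s\<^sup>2 / (s + \<delta>) \<le> s"
    using s \<delta> sd by (simp add: pos_divide_le_eq power2_eq_square distrib_left)
  have q2: "b\<^sup>2 / (b + \<delta>) \<le> b"
    using b \<delta> bd by (simp add: pos_divide_le_eq power2_eq_square distrib_left)
  have "k\<^sup>2 \<le> (1 + (b + \<delta>) / (s + \<delta>)) * s\<^sup>2 + (1 + 1 / ((b + \<delta>) / (s + \<delta>))) * b\<^sup>2"
    using sd bd by (intro H) simp
  also have "\<dots> = T * (s\<^sup>2 / (s + \<delta>)) + T * (b\<^sup>2 / (b + \<delta>))"
    unfolding e1 e2 by simp
  also have "\<dots> \<le> T * s + T * b"
    by (rule add_mono[OF mult_left_mono[OF q1 T] mult_left_mono[OF q2 T]])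
  also have "\<dots> = T * (s + b)" by (rule distrib_left[symmetric])
  also have "\<dots> \<le> T * T" using T \<delta> by (intro mult_left_mono) (simp_all add: T_def)
  also have "T * T = (s + b + \<epsilon>)\<^sup>2" by (simp add: T_def \<delta>_def power2_eq_square)
  finally have "k\<^sup>2 \<le> (s + b + \<epsilon>)\<^sup>2" .
  moreover have "0 \<le> s + b + \<epsilon>" using s b \<epsilon> by simp
  ultimately show "k \<le> s + b + \<epsilon>" by (rule power2_le_imp_le)
qed

context prob_space
begin

lemma integrable_square_lincomb:
  fixes f g :: "'a \<Rightarrow> real"
  assumes [measurable]: "f \<in> borel_measurable M" "g \<in> borel_measurable M"
    and "integrable M (\<lambda>x. (f x)\<^sup>2)" "integrable M (\<lambda>x. (g x)\<^sup>2)"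
  shows "integrable M (\<lambda>x. (a * f x + b * g x + c)\<^sup>2)"
proof (rule Bochner_Integration.integrable_bound)
  show "integrable M (\<lambda>x. 3 * (a\<^sup>2 * (f x)\<^sup>2 + b\<^sup>2 * (g x)\<^sup>2 + c\<^sup>2))"
    using assms(3,4) by auto
  show "AE x in M. norm ((a * f x + b * g x + c)\<^sup>2) \<le> norm (3 * (a\<^sup>2 * (f x)\<^sup>2 + b\<^sup>2 * (g x)\<^sup>2 + c\<^sup>2))"
    using square_lincomb_le[of a "f _" b "g _" c] by (intro AE_I2) (simp add: power_mult_distrib)
qed measurable

lemma integrable_square_diff:
  fixes f g :: "'a \<Rightarrow> real"
  assumes "f \<in> borel_measurable M" "g \<in> borel_measurable M"
    and "integrable M (\<lambda>x. (f x)\<^sup>2)" "integrable M (\<lambda>x. (g x)\<^sup>2)"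
  shows "integrable M (\<lambda>x. (f x - g x - c)\<^sup>2)"
  using integrable_square_lincomb[OF assms, of 1 "-1" "-c"] by simp

lemma integrable_of_integrable_square:
  fixes f :: "'a \<Rightarrow> real"
  assumes [measurable]: "f \<in> borel_measurable M" and "integrable M (\<lambda>x. (f x)\<^sup>2)"
  shows "integrable M f"
proof (rule Bochner_Integration.integrable_bound)
  show "integrable M (\<lambda>x. 1 + (f x)\<^sup>2)" using assms(2) by auto
  have "\<bar>f x\<bar> \<le> 1 + (f x)\<^sup>2" for x
  proof (cases "\<bar>f x\<bar> \<le> 1")
    case False
    hence "\<bar>f x\<bar> * 1 \<le> \<bar>f x\<bar> * \<bar>f x\<bar>" by (intro mult_left_mono) auto
    thus ?thesis by (simp add: power2_eq_square)
  qed (simp add: add_increasing2)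
  thus "AE x in M. norm (f x) \<le> norm (1 + (f x)\<^sup>2)" by simp
qed measurable

lemma sqrt_integral_square_add_le:
  fixes f g :: "'a \<Rightarrow> real"
  assumes [measurable]: "f \<in> borel_measurable M" "g \<in> borel_measurable M"
    and f2: "integrable M (\<lambda>x. (f x)\<^sup>2)" and g2: "integrable M (\<lambda>x. (g x)\<^sup>2)"
  shows "sqrt (\<integral>x. (f x + g x)\<^sup>2 \<partial>M) \<le> sqrt (\<integral>x. (f x)\<^sup>2 \<partial>M) + sqrt (\<integral>x. (g x)\<^sup>2 \<partial>M)"
proof (rule le_add_of_weighted_square_bounds)
  fix w :: real assume w: "w > 0"
  have "(\<integral>x. (f x + g x)\<^sup>2 \<partial>M) \<le> (\<integral>x. (1 + w) * (f x)\<^sup>2 + (1 + 1/w) * (g x)\<^sup>2 \<partial>M)"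
    using integrable_square_lincomb[OF assms, of 1 1 0] f2 g2 square_add_le_weighted[OF w]
    by (intro integral_mono) auto
  also have "\<dots> = (1 + w) * (\<integral>x. (f x)\<^sup>2 \<partial>M) + (1 + 1/w) * (\<integral>x. (g x)\<^sup>2 \<partial>M)"
    using f2 g2 by simp
  finally show "(sqrt (\<integral>x. (f x + g x)\<^sup>2 \<partial>M))\<^sup>2
      \<le> (1 + w) * (sqrt (\<integral>x. (f x)\<^sup>2 \<partial>M))\<^sup>2 + (1 + 1/w) * (sqrt (\<integral>x. (g x)\<^sup>2 \<partial>M))\<^sup>2"
    by simp
qed simp_all

end

section \<open>Product measures\<close>

lemma distr_pair_snd:
  assumes "prob_space M" "sigma_finite_measure K" "sets K = sets borel"
  shows "distr (M \<Otimes>\<^sub>M K) borel snd = K"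
proof (rule measure_eqI)
  interpret M: prob_space M by fact
  interpret K: sigma_finite_measure K by fact
  show "sets (distr (M \<Otimes>\<^sub>M K) borel snd) = sets K" using assms(3) by simp
  fix A assume "A \<in> sets (distr (M \<Otimes>\<^sub>M K) borel snd)"
  hence A: "A \<in> sets K" using assms(3) by simp
  have "snd -` A \<inter> space (M \<Otimes>\<^sub>M K) = space M \<times> A"
    using sets.sets_into_space[OF A] by (auto simp: space_pair_measure)
  hence "emeasure (distr (M \<Otimes>\<^sub>M K) borel snd) A = emeasure (M \<Otimes>\<^sub>M K) (space M \<times> A)"
    using A assms(3) by (subst emeasure_distr) (auto simp: measurable_cong_sets[OF refl assms(3)[symmetric]])
  also have "\<dots> = emeasure K A"
    using A by (simp add: K.emeasure_pair_measure_Times M.emeasure_space_1)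
  finally show "emeasure (distr (M \<Otimes>\<^sub>M K) borel snd) A = emeasure K A" .
qed

lemma distr_pair_fst_sets_eq:
  assumes "prob_space M" "sets K = sets T"
  shows "distr (K \<Otimes>\<^sub>M M) T fst = K"
proof -
  have "distr (K \<Otimes>\<^sub>M M) T fst = distr (K \<Otimes>\<^sub>M M) K fst"
    using assms(2) by (intro distr_cong) auto
  also have "\<dots> = K" using assms(1) by (rule prob_space.distr_pair_fst)
  finally show ?thesis .
qed

lemma integrable_pair_fst:
  fixes g :: "'a \<Rightarrow> real"
  assumes "prob_space M" and [measurable]: "g \<in> borel_measurable K"
  shows "integrable (K \<Otimes>\<^sub>M M) (\<lambda>\<omega>. g (fst \<omega>)) \<longleftrightarrow> integrable K g"
    and "(\<integral>\<omega>. g (fst \<omega>) \<partial>(K \<Otimes>\<^sub>M M)) = (\<integral>x. g x \<partial>K)"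
proof -
  have d: "distr (K \<Otimes>\<^sub>M M) K fst = K" using assms(1) by (rule prob_space.distr_pair_fst)
  show "integrable (K \<Otimes>\<^sub>M M) (\<lambda>\<omega>. g (fst \<omega>)) \<longleftrightarrow> integrable K g"
    using integrable_distr_eq[of fst "K \<Otimes>\<^sub>M M" K g] by (simp add: d)
  show "(\<integral>\<omega>. g (fst \<omega>) \<partial>(K \<Otimes>\<^sub>M M)) = (\<integral>x. g x \<partial>K)"
    using integral_distr[of fst "K \<Otimes>\<^sub>M M" K g] by (simp add: d)
qed

lemma density_pair_measure_prob_space:
  assumes "sigma_finite_measure M" "prob_space K" "f \<in> borel_measurable M"
  shows "density M f \<Otimes>\<^sub>M K = density (M \<Otimes>\<^sub>M K) (\<lambda>\<omega>. f (fst \<omega>))"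
proof -
  have "density M f \<Otimes>\<^sub>M density K (\<lambda>_. 1) = density (M \<Otimes>\<^sub>M K) (\<lambda>(x, u). f x * 1)"
    using assms by (intro pair_measure_density) (simp_all add: density_1 prob_space_imp_sigma_finite)
  thus ?thesis by (simp add: density_1 case_prod_beta')
qed

section \<open>The Donsker--Varadhan inequality\<close>

lemma donsker_varadhan_le:
  fixes M :: "'a measure" and f H :: "'a \<Rightarrow> real"
  defines "Q \<equiv> density M (\<lambda>x. ennreal (f x))"
  assumes [measurable]: "f \<in> borel_measurable M" "H \<in> borel_measurable M"
    and f_nonneg: "\<And>x. 0 \<le> f x" and "prob_space Q"
    and iH: "integrable Q H" and il: "integrable Q (\<lambda>x. ln (f x))"
    and bound: "(\<integral>\<^sup>+x. ennreal (exp (H x)) \<partial>M) \<le> ennreal c" and c: "c > 0"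
  shows "(\<integral>x. H x \<partial>Q) - ln c \<le> (\<integral>x. ln (f x) \<partial>Q)"
proof -
  interpret Q: prob_space Q by fact
  have [measurable_cong]: "sets Q = sets M" by (simp add: Q_def)
  define k where "k x = H x - ln (f x) - ln c" for x
  have [measurable]: "k \<in> borel_measurable M" unfolding k_def by measurable
  have "(\<integral>\<^sup>+x. ennreal (exp (k x)) \<partial>Q) = (\<integral>\<^sup>+x. ennreal (f x) * ennreal (exp (k x)) \<partial>M)"
    unfolding Q_def by (rule nn_integral_density) measurable
  also have "\<dots> \<le> (\<integral>\<^sup>+x. ennreal (1/c) * ennreal (exp (H x)) \<partial>M)"
  proof (rule nn_integral_mono)
    fix x
    show "ennreal (f x) * ennreal (exp (k x)) \<le> ennreal (1/c) * ennreal (exp (H x))"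
    proof (cases "f x > 0")
      case True
      hence "f x * exp (k x) = 1/c * exp (H x)" using c by (simp add: k_def exp_diff)
      thus ?thesis using f_nonneg[of x] c by (simp add: ennreal_mult[symmetric])
    qed (use f_nonneg[of x] in simp)
  qed
  also have "\<dots> = ennreal (1/c) * (\<integral>\<^sup>+x. ennreal (exp (H x)) \<partial>M)"
    by (rule nn_integral_cmult) measurable
  also have "\<dots> \<le> ennreal (1/c) * ennreal c" by (intro mult_left_mono bound) simp
  also have "\<dots> = 1" using c by (simp add: ennreal_mult[symmetric])
  finally have nn1: "(\<integral>\<^sup>+x. ennreal (exp (k x)) \<partial>Q) \<le> 1" .
  have ik: "integrable Q (\<lambda>x. exp (k x))"
    using nn1 by (intro integrableI_nonneg) (auto simp: top.not_eq_extremum intro: le_less_trans)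
  have "(\<integral>x. exp (k x) \<partial>Q) \<le> 1"
    using nn1 ik by (metis ennreal_le_1 nn_integral_eq_integral AE_I2 exp_ge_zero)
  moreover have ik1: "integrable Q (\<lambda>x. 1 + k x)" unfolding k_def using iH il by simp
  have "(\<integral>x. 1 + k x \<partial>Q) \<le> (\<integral>x. exp (k x) \<partial>Q)"
    by (rule integral_mono[OF ik1 ik]) (rule exp_ge_add_one_self)
  moreover have "(\<integral>x. 1 + k x \<partial>Q) = 1 + (\<integral>x. H x \<partial>Q) - (\<integral>x. ln (f x) \<partial>Q) - ln c"
    unfolding k_def using iH il by (simp add: Q.prob_space)
  ultimately show ?thesis by linarith
qed

section \<open>The Gaussian law\<close>

lemma normal_density_mult_exp:
  fixes \<mu> \<sigma> w D x :: real
  assumes \<sigma>: "\<sigma> > 0" and D: "D > 0"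
  shows "normal_density \<mu> \<sigma> x * exp ((x - \<mu>)\<^sup>2 / (2 * \<sigma>\<^sup>2) - (x - w)\<^sup>2 / (2 * D))
    = sqrt D / \<sigma> * normal_density w (sqrt D) x"
proof -
  have "exp (- (x - \<mu>)\<^sup>2 / (2 * \<sigma>\<^sup>2)) * exp ((x - \<mu>)\<^sup>2 / (2 * \<sigma>\<^sup>2) - (x - w)\<^sup>2 / (2 * D))
      = exp (- (x - w)\<^sup>2 / (2 * D))"
    by (simp add: exp_add[symmetric] minus_divide_left[symmetric])
  moreover have "sqrt (2 * pi * \<sigma>\<^sup>2) = sqrt (2 * pi) * \<sigma>" "sqrt (2 * pi * D) = sqrt (2 * pi) * sqrt D"
    using \<sigma> by (simp_all add: real_sqrt_mult)
  ultimately show ?thesis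
    using \<sigma> D by (simp add: normal_density_def)
qed

locale gaussian_law =
  fixes \<mu> \<sigma> :: real
  assumes \<sigma>_pos: "\<sigma> > 0"
begin

abbreviation "N \<equiv> gaussian \<mu> \<sigma>"

lemma prob_space_N: "prob_space N"
  unfolding gaussian_def using \<sigma>_pos by (rule prob_space_normal_density)

lemma sets_N [simp, measurable_cong]: "sets N = sets borel"
  by (simp add: gaussian_def)

lemma space_N [simp]: "space N = UNIV"
  by (simp add: gaussian_def)

lemma real_distribution_N: "real_distribution N"
  using prob_space_N by (simp add: real_distribution_def real_distribution_axioms_def)

lemma integrable_N_iff:
  "g \<in> borel_measurable borel \<Longrightarrow> integrable N g \<longleftrightarrow> integrable lborel (\<lambda>x. normal_density \<mu> \<sigma> x * g x)"
  for g :: "real \<Rightarrow> real"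
  unfolding gaussian_def by (subst integrable_density) auto

lemma integral_N:
  "g \<in> borel_measurable borel \<Longrightarrow> (\<integral>x. g x \<partial>N) = (\<integral>x. normal_density \<mu> \<sigma> x * g x \<partial>lborel)"
  for g :: "real \<Rightarrow> real"
  unfolding gaussian_def by (subst integral_density) auto

lemma integral_N_centered_square: "(\<integral>x. (x - \<mu>)\<^sup>2 \<partial>N) = \<sigma>\<^sup>2"
  using integral_normal_moment_even[OF \<sigma>_pos, of \<mu> 1] by (simp add: integral_N)

lemma integral_N_id: "(\<integral>x. x \<partial>N) = \<mu>"
  using integral_normal_moment_nz_1[OF \<sigma>_pos, of \<mu>] by (simp add: integral_N)

lemma integrable_N_square: "integrable N (\<lambda>x. x\<^sup>2)"
proof -
  interpret prob_space N by (rule prob_space_N)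
  have "integrable N (\<lambda>x. (x - \<mu>)\<^sup>2)"
    using integrable_normal_moment[OF \<sigma>_pos, of \<mu> 2] by (simp add: integrable_N_iff)
  hence "integrable N (\<lambda>x. (1 * (x - \<mu>) + 0 * (x - \<mu>) + \<mu>)\<^sup>2)"
    by (intro integrable_square_lincomb) auto
  thus ?thesis by simp
qed

text \<open>The integrand is \<open>\<sigma> / \<surd>D\<close> times the density ratio of \<open>\<N>(w, D)\<close> to \<open>N\<close>.\<close>
lemma nn_integral_N_exp_quadratic:
  assumes D: "D > 0"
  shows "(\<integral>\<^sup>+x. ennreal (exp ((x - \<mu>)\<^sup>2 / (2 * \<sigma>\<^sup>2) - (x - w)\<^sup>2 / (2 * D))) \<partial>N)
    = ennreal (sqrt D / \<sigma>)"
proof -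
  interpret P: prob_space "density lborel (normal_density w (sqrt D))"
    using D by (intro prob_space_normal_density) simp
  have "(\<integral>\<^sup>+x. ennreal (exp ((x - \<mu>)\<^sup>2 / (2 * \<sigma>\<^sup>2) - (x - w)\<^sup>2 / (2 * D))) \<partial>N)
      = (\<integral>\<^sup>+x. ennreal (sqrt D / \<sigma>) * ennreal (normal_density w (sqrt D) x) \<partial>lborel)"
    unfolding gaussian_def using D \<sigma>_pos
    by (subst nn_integral_density)
       (auto intro!: nn_integral_cong simp: ennreal_mult[symmetric] normal_density_mult_exp)
  also have "\<dots> = ennreal (sqrt D / \<sigma>) * emeasure (density lborel (normal_density w (sqrt D))) UNIV"
    by (subst nn_integral_cmult) (auto simp: emeasure_density)
  finally show ?thesis using P.emeasure_space_1 by simp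
qed

definition Phi :: "real \<Rightarrow> real" where "Phi x = measure N {..x}"

lemma Phi_eq_cdf: "Phi = cdf N"
  by (simp add: Phi_def[abs_def] cdf_def)

lemma emeasure_N_Ioc_pos:
  assumes "a < b" shows "emeasure N {a<..b} > 0"
proof (rule ccontr)
  assume "\<not> ?thesis"
  hence "(\<integral>\<^sup>+x. ennreal (normal_density \<mu> \<sigma> x) * indicator {a<..b} x \<partial>lborel) = 0"
    by (simp add: gaussian_def emeasure_density)
  hence "AE x in lborel. ennreal (normal_density \<mu> \<sigma> x) * indicator {a<..b} x = 0"
    by (subst (asm) nn_integral_0_iff_AE) auto
  hence "AE x in lborel. x \<notin> {a<..b}"
    by eventually_elim
       (auto simp: normal_density_pos[OF \<sigma>_pos, THEN less_imp_neq, THEN not_sym] split: split_indicator)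
  moreover have "{x \<in> space lborel. \<not> x \<notin> {a<..b}} = {a<..b}" by auto
  ultimately have "emeasure lborel {a<..b} = 0"
    by (subst (asm) AE_iff_measurable) auto
  thus False using assms by simp
qed

lemma Phi_less: "a < b \<Longrightarrow> Phi a < Phi b"
proof -
  assume ab: "a < b"
  interpret prob_space N by (rule prob_space_N)
  have "measure N {a<..b} > 0"
    using emeasure_N_Ioc_pos[OF ab] by (simp add: emeasure_eq_measure)
  moreover have "Phi b - Phi a = measure N {a<..b}"
    unfolding Phi_eq_cdf using real_distribution_N ab
    by (intro finite_borel_measure.cdf_diff_eq real_distribution.finite_borel_measure_M)
  ultimately show ?thesis by simp
qed

lemma Phi_le_iff: "Phi a \<le> Phi b \<longleftrightarrow> a \<le> b"
  using Phi_less[of a b] Phi_less[of b a] by (cases a b rule: linorder_cases) auto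

lemma Phi_pos: "Phi x > 0"
  using Phi_less[of "x - 1" x] by (simp add: Phi_def) (meson le_less_trans measure_nonneg)

lemma Phi_less_1: "Phi x < 1"
  using Phi_less[of x "x + 1"] prob_space.prob_le_1[OF prob_space_N, of "{..x + 1}"]
  by (simp add: Phi_def)

lemma isCont_Phi: "isCont Phi x"
proof -
  have "(\<integral>\<^sup>+y. ennreal (normal_density \<mu> \<sigma> y) * indicator {x} y \<partial>lborel) = 0"
    using AE_lborel_singleton[of x] by (subst nn_integral_0_iff_AE) (auto elim!: eventually_mono)
  hence "measure N {x} = 0" by (simp add: gaussian_def emeasure_density measure_def)
  thus ?thesis unfolding Phi_eq_cdf using real_distribution_N
    by (simp add: finite_borel_measure.isCont_cdf real_distribution.finite_borel_measure_M)
qed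

lemma Phi_surj: assumes "0 < w" "w < 1" shows "\<exists>x. Phi x = w"
proof -
  have fin: "finite_borel_measure N"
    by (rule real_distribution.finite_borel_measure_M[OF real_distribution_N])
  have "(Phi \<longlongrightarrow> 0) at_bot" "(Phi \<longlongrightarrow> 1) at_top"
    unfolding Phi_eq_cdf using real_distribution_N fin
    by (simp_all add: finite_borel_measure.cdf_lim_at_bot real_distribution.cdf_lim_at_top_prob)
  from order_tendstoD(2)[OF this(1) assms(1)] order_tendstoD(1)[OF this(2) assms(2)]
  obtain a b where a: "Phi a < w" and b: "Phi b > w"
    by (auto simp: eventually_at_bot_linorder eventually_at_top_linorder)
  hence "a \<le> b" using Phi_le_iff[of b a] by linarith
  thus ?thesis using IVT[of Phi a w b] a b isCont_Phi by auto
qed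

definition Phiinv :: "real \<Rightarrow> real" where
  "Phiinv w = (if 0 < w \<and> w < 1 then (THE x. Phi x = w) else 0)"

lemma Phi_Phiinv: "0 < w \<Longrightarrow> w < 1 \<Longrightarrow> Phi (Phiinv w) = w"
proof -
  assume w: "0 < w" "w < 1"
  then obtain x where x: "Phi x = w" using Phi_surj by blast
  have "(THE x. Phi x = w) = x"
  proof (rule the_equality)
    fix y assume "Phi y = w"
    thus "y = x" using x Phi_le_iff[of x y] Phi_le_iff[of y x] by simp
  qed (rule x)
  thus ?thesis using x w by (simp add: Phiinv_def)
qed

lemma Phiinv_le_iff: "0 < w \<Longrightarrow> w < 1 \<Longrightarrow> Phiinv w \<le> s \<longleftrightarrow> w \<le> Phi s"
  using Phi_le_iff[of "Phiinv w" s] by (simp add: Phi_Phiinv)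

lemma less_Phiinv_iff: "0 < w \<Longrightarrow> w < 1 \<Longrightarrow> t < Phiinv w \<longleftrightarrow> Phi t < w"
  by (simp add: not_le[symmetric] Phiinv_le_iff)

lemma Phiinv_measurable [measurable]: "Phiinv \<in> borel_measurable borel"
proof (subst borel_measurable_iff_le, intro allI)
  fix s
  have "{w \<in> space borel. Phiinv w \<le> s}
      = {w. 0 < w \<and> w < 1 \<and> w \<le> Phi s} \<union> {w. \<not>(0 < w \<and> w < 1) \<and> 0 \<le> s}"
    using Phiinv_le_iff by (auto simp: Phiinv_def)
  also have "\<dots> \<in> sets borel" by measurable
  finally show "{w \<in> space borel. Phiinv w \<le> s} \<in> sets borel" .
qed

end

section \<open>The randomized distributional transform\<close>

definition U :: "real measure" where "U = density lborel (indicator {0..1})"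

lemma sets_U [simp, measurable_cong]: "sets U = sets borel"
  by (simp add: U_def)

lemma space_U [simp]: "space U = UNIV"
  by (simp add: U_def)

lemma emeasure_U: "A \<in> sets borel \<Longrightarrow> emeasure U A = emeasure lborel (A \<inter> {0..1})"
  unfolding U_def
  by (subst emeasure_density)
     (auto simp: indicator_inter_arith[symmetric] mult.commute intro!: nn_integral_indicator)

lemma prob_space_U: "prob_space U"
  by (rule prob_spaceI) (simp add: emeasure_U)

definition clamp01 :: "real \<Rightarrow> real" where "clamp01 u = max 0 (min 1 u)"

lemma clamp01_bounds: "0 \<le> clamp01 u" "clamp01 u \<le> 1"
  by (auto simp: clamp01_def)

lemma clamp01_id: "0 \<le> u \<Longrightarrow> u \<le> 1 \<Longrightarrow> clamp01 u = u"
  by (auto simp: clamp01_def)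

lemma clamp01_measurable [measurable]: "clamp01 \<in> borel_measurable borel"
  unfolding clamp01_def by measurable

locale real_law =
  fixes p :: "real measure"
  assumes real_distr_p: "real_distr p"
begin

lemma prob_space_p: "prob_space p"
  using real_distr_p by (simp add: real_distr_def)

lemma sets_p [simp, measurable_cong]: "sets p = sets borel"
  using real_distr_p by (simp add: real_distr_def)

lemma space_p [simp]: "space p = UNIV"
  using sets_eq_imp_space_eq[OF sets_p] by simp

lemma real_distribution_p: "real_distribution p"
  using prob_space_p by (simp add: real_distribution_def real_distribution_axioms_def)

sublocale P: prob_space p by (rule prob_space_p)

definition F :: "real \<Rightarrow> real" where "F y = measure p {..y}"

definition F_left :: "real \<Rightarrow> real" where "F_left y = measure p {..<y}"

lemma F_eq_cdf: "F = cdf p"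
  by (simp add: F_def[abs_def] cdf_def)

lemma F_mono: "x \<le> y \<Longrightarrow> F x \<le> F y"
  unfolding F_def by (intro P.finite_measure_mono) auto

lemma F_left_le_F: "F_left y \<le> F y"
  unfolding F_def F_left_def by (intro P.finite_measure_mono) auto

lemma F_le_F_left: "x < y \<Longrightarrow> F x \<le> F_left y"
  unfolding F_def F_left_def by (intro P.finite_measure_mono) auto

lemma F_minus_F_left: "F y - F_left y = measure p {y}"
proof -
  have "{..y} = {..<y} \<union> {y}" by auto
  moreover have "measure p ({..<y} \<union> {y}) = measure p {..<y} + measure p {y}"
    by (rule P.finite_measure_Union) auto
  ultimately show ?thesis unfolding F_def F_left_def by simp
qed

lemma F_le_1: "F y \<le> 1"
  by (simp add: F_def)

lemma F_measurable [measurable]: "F \<in> borel_measurable borel"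
  by (rule borel_measurable_mono) (auto simp: mono_def F_mono)

lemma F_left_measurable [measurable]: "F_left \<in> borel_measurable borel"
  by (rule borel_measurable_mono) (auto simp: mono_def F_left_def intro!: P.finite_measure_mono)

lemma quantile_exists:
  assumes t: "0 < t" "t < 1"
  shows "\<exists>y0. t \<le> F y0 \<and> F_left y0 \<le> t \<and> (\<forall>y<y0. F y < t)"
proof -
  have fin: "finite_borel_measure p"
    by (rule real_distribution.finite_borel_measure_M[OF real_distribution_p])
  define S where "S = {y. t \<le> F y}"
  have "(F \<longlongrightarrow> 1) at_top" "(F \<longlongrightarrow> 0) at_bot"
    unfolding F_eq_cdf using real_distribution_p fin
    by (simp_all add: real_distribution.cdf_lim_at_top_prob finite_borel_measure.cdf_lim_at_bot)
  from order_tendstoD(1)[OF this(1) t(2)] order_tendstoD(2)[OF this(2) t(1)]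
  obtain a b where b: "\<And>y. y \<ge> b \<Longrightarrow> F y > t" and a: "\<And>y. y \<le> a \<Longrightarrow> F y < t"
    by (auto simp: eventually_at_bot_linorder eventually_at_top_linorder)
  have "b \<in> S" using b[of b] by (simp add: S_def)
  hence Sne: "S \<noteq> {}" by blast
  have Sbdd: "bdd_below S" unfolding bdd_below_def S_def
    using a by (metis linorder_not_le mem_Collect_eq not_less_iff_gr_or_eq)
  define y0 where "y0 = Inf S"
  have below: "F y < t" if "y < y0" for y
    using that cInf_lower[OF _ Sbdd, of y] by (force simp: y0_def S_def)
  have above: "t \<le> F y" if y: "y > y0" for y
  proof -
    obtain s where "s \<in> S" "s < y" using y cInf_less_iff[OF Sne Sbdd] y0_def by auto
    thus ?thesis using F_mono[of s y] by (auto simp: S_def)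
  qed
  have "(F \<longlongrightarrow> F y0) (at_right y0)"
    using finite_borel_measure.cdf_is_right_cont[OF fin, of y0]
    by (simp add: F_eq_cdf continuous_within)
  moreover have "eventually (\<lambda>y. t \<le> F y) (at_right y0)"
    using above by (auto simp: eventually_at_right_field intro!: exI[of _ "y0 + 1"])
  ultimately have "t \<le> F y0" by (rule tendsto_lowerbound) simp
  moreover have "(F \<longlongrightarrow> F_left y0) (at_left y0)"
    unfolding F_eq_cdf F_left_def using fin by (simp add: finite_borel_measure.cdf_at_left)
  moreover have "eventually (\<lambda>y. F y \<le> t) (at_left y0)"
    using below by (auto simp: eventually_at_left_field less_imp_le intro!: exI[of _ "y0 - 1"])
  ultimately have "F_left y0 \<le> t" by (intro tendsto_upperbound) auto
  thus ?thesis using \<open>t \<le> F y0\<close> below by blast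
qed

text \<open>
  Rueschendorf's randomized distributional transform: it spreads an atom of \<open>p\<close> at \<open>y\<close>
  uniformly over the jump \<open>[F_left y, F y]\<close>, so it is uniformly distributed under \<open>p \<otimes> U\<close>.
  The clamp only matters outside the support of \<open>U\<close>.
\<close>
definition W :: "real \<times> real \<Rightarrow> real" where
  "W z = F_left (fst z) + clamp01 (snd z) * (F (fst z) - F_left (fst z))"

lemma W_measurable [measurable]: "W \<in> borel_measurable (borel \<Otimes>\<^sub>M borel)"
  unfolding W_def by measurable

lemma F_left_le_W: "F_left y \<le> W (y, u)"
  unfolding W_def using clamp01_bounds[of u] F_left_le_F[of y] by simp

lemma W_le_F: "W (y, u) \<le> F y"
proof -
  have "clamp01 u * (F y - F_left y) \<le> 1 * (F y - F_left y)"
    using clamp01_bounds[of u] F_left_le_F[of y] by (intro mult_right_mono) auto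
  thus ?thesis unfolding W_def by simp
qed

lemma W_bounds: "0 \<le> W z" "W z \<le> 1"
proof -
  obtain y u where z: "z = (y, u)" by force
  have "0 \<le> F_left y" by (simp add: F_left_def)
  thus "0 \<le> W z" "W z \<le> 1"
    using F_left_le_W[of y u] W_le_F[of y u] F_le_1[of y] by (simp_all add: z)
qed

lemma emeasure_U_W_less_slice:
  assumes t: "F_left y \<le> t" "t \<le> F y"
  shows "emeasure U (Pair y -` {z. W z < t})
    = ennreal (if F_left y < F y then (t - F_left y) / (F y - F_left y) else 0)"
proof (cases "F_left y < F y")
  case True
  define \<Delta> where "\<Delta> = F y - F_left y"
  define c where "c = (t - F_left y) / \<Delta>"
  have \<Delta>: "\<Delta> > 0" using True by (simp add: \<Delta>_def)
  have c: "0 \<le> c" "c \<le> 1" using t \<Delta> by (simp_all add: c_def \<Delta>_def field_simps)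
  have "{u \<in> space borel. W (y, u) < t} \<in> sets borel" by measurable
  hence "emeasure U (Pair y -` {z. W z < t}) = emeasure lborel ({u. W (y, u) < t} \<inter> {0..1})"
    by (simp add: emeasure_U vimage_def)
  also have "{u. W (y, u) < t} \<inter> {0..1} = {0..<c}"
  proof (intro set_eqI iffI)
    fix u assume u: "u \<in> {u. W (y, u) < t} \<inter> {0..1}"
    hence "u * \<Delta> < t - F_left y" by (auto simp: W_def clamp01_id \<Delta>_def)
    thus "u \<in> {0..<c}" using u \<Delta> by (simp add: c_def field_simps)
  next
    fix u assume u: "u \<in> {0..<c}"
    hence "u * \<Delta> < t - F_left y" using \<Delta> by (simp add: c_def field_simps)
    thus "u \<in> {u. W (y, u) < t} \<inter> {0..1}" using u c by (simp add: W_def clamp01_id \<Delta>_def)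
  qed
  finally show ?thesis using True c by (simp add: c_def \<Delta>_def)
next
  case False
  hence "W (y, u) = F y" for u using F_left_le_F[of y] by (simp add: W_def)
  hence "Pair y -` {z. W z < t} = {}" using t by auto
  thus ?thesis using False by simp
qed

abbreviation "PU \<equiv> p \<Otimes>\<^sub>M U"

sublocale PU: prob_space PU
  using prob_space_p prob_space_U by (simp add: prob_space_pair pair_prob_space.intro)

lemma sets_PU [measurable_cong]: "sets PU = sets (borel \<Otimes>\<^sub>M borel)"
  by (intro sets_pair_measure_cong) auto

lemma space_PU [simp]: "space PU = UNIV"
  by (simp add: space_pair_measure)

lemma distr_PU_fst: "distr PU borel fst = p"
  using prob_space_U by (rule distr_pair_fst_sets_eq) simp

lemma sets_PU_Collect: "Measurable.pred PU P \<Longrightarrow> {z. P z} \<in> sets PU"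
proof -
  assume [measurable]: "Measurable.pred PU P"
  have "{z \<in> space PU. P z} \<in> sets PU" by measurable
  thus ?thesis by simp
qed

lemma prob_W_less_unit: "0 < t \<Longrightarrow> t < 1 \<Longrightarrow> PU.prob {z. W z < t} = t"
proof -
  assume t: "0 < t" "t < 1"
  then obtain y0 where y0: "t \<le> F y0" "F_left y0 \<le> t" "\<And>y. y < y0 \<Longrightarrow> F y < t"
    using quantile_exists by blast
  define c where "c = (if F_left y0 < F y0 then (t - F_left y0) / (F y0 - F_left y0) else 0)"
  have c: "0 \<le> c" "c * (F y0 - F_left y0) = t - F_left y0"
    using y0 F_left_le_F[of y0] by (auto simp: c_def)
  interpret U: prob_space U by (rule prob_space_U)
  have "emeasure PU {z. W z < t} = (\<integral>\<^sup>+y. emeasure U (Pair y -` {z. W z < t}) \<partial>p)"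
    by (rule U.emeasure_pair_measure_alt, rule sets_PU_Collect) measurable
  also have "\<dots> = (\<integral>\<^sup>+y. indicator {..<y0} y + ennreal c * indicator {y0} y \<partial>p)"
  proof (rule nn_integral_cong)
    fix y
    show "emeasure U (Pair y -` {z. W z < t}) = indicator {..<y0} y + ennreal c * indicator {y0} y"
    proof (cases rule: linorder_cases[of y y0])
      case less
      hence "Pair y -` {z. W z < t} = UNIV" using W_le_F[of y] y0(3) by (auto intro: le_less_trans)
      thus ?thesis using less U.emeasure_space_1 by simp
    next
      case greater
      hence "t \<le> W (y, u)" for u
        using F_le_F_left[OF greater] F_left_le_W[of y u] y0(1) by linarith
      hence "Pair y -` {z. W z < t} = {}" by (auto simp: not_less[symmetric])
      thus ?thesis using greater by simp
    qed (use y0 emeasure_U_W_less_slice[of y0 t] in \<open>simp add: c_def\<close>)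
  qed
  also have "\<dots> = ennreal (F_left y0 + c * (F y0 - F_left y0))"
    using F_minus_F_left[of y0] c(1)
    by (simp add: nn_integral_add nn_integral_cmult_indicator P.emeasure_eq_measure F_left_def
        ennreal_mult ennreal_plus[symmetric])
  finally show ?thesis using t c by (simp add: PU.emeasure_eq_measure)
qed

lemma W_pred_sets: "Measurable.pred borel P \<Longrightarrow> {z. P (W z)} \<in> sets PU"
proof -
  assume [measurable]: "Measurable.pred borel P"
  show ?thesis by (rule sets_PU_Collect) measurable
qed

lemma W_sets [simp]:
  "{z. W z < a} \<in> sets (borel \<Otimes>\<^sub>M borel)" "{z. W z = a} \<in> sets (borel \<Otimes>\<^sub>M borel)"
  "{z. W z \<le> a} \<in> sets (borel \<Otimes>\<^sub>M borel)" "{z. a \<le> W z} \<in> sets (borel \<Otimes>\<^sub>M borel)"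
  "{z. a \<le> W z \<and> W z \<le> b} \<in> sets (borel \<Otimes>\<^sub>M borel)"
  "UNIV - {z. W z < a} \<in> sets (borel \<Otimes>\<^sub>M borel)" "UNIV - {z. a \<le> W z} \<in> sets (borel \<Otimes>\<^sub>M borel)"
  using W_pred_sets[of "\<lambda>w. w < a"] W_pred_sets[of "\<lambda>w. w = a"] W_pred_sets[of "\<lambda>w. w \<le> a"]
    W_pred_sets[of "\<lambda>w. a \<le> w"] W_pred_sets[of "\<lambda>w. a \<le> w \<and> w \<le> b"]
    W_pred_sets[of "\<lambda>w. \<not> w < a"] W_pred_sets[of "\<lambda>w. \<not> a \<le> w"]
  by (auto simp: sets_PU set_diff_eq)

lemma prob_W_ge_1: "PU.prob {z. 1 \<le> W z} = 0"
proof -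
  have "PU.prob {z. 1 \<le> W z} \<le> 0 + e" if e: "e > 0" for e
  proof -
    define t where "t = 1 - min e (1/2)"
    have t: "0 < t" "t < 1" using e by (auto simp: t_def)
    have "PU.prob {z. 1 \<le> W z} \<le> PU.prob (space PU - {z. W z < t})"
      using t by (intro PU.finite_measure_mono) auto
    also have "\<dots> = 1 - t" using prob_W_less_unit[OF t] by (subst PU.prob_compl) auto
    finally show ?thesis by (simp add: t_def)
  qed
  hence "PU.prob {z. 1 \<le> W z} \<le> 0" by (rule field_le_epsilon)
  thus ?thesis by (simp add: order.antisym)
qed

lemma prob_W_less: "PU.prob {z. W z < a} = clamp01 a"
proof -
  consider "a \<le> 0" | "0 < a \<and> a < 1" | "1 \<le> a" by linarith
  thus ?thesis
  proof cases
    case 1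
    hence "\<not> W z < a" for z using W_bounds(1)[of z] by linarith
    hence e: "{z. W z < a} = {}" by blast
    have "PU.prob {z. W z < a} = 0" unfolding e by simp
    thus ?thesis using 1 by (simp add: clamp01_def)
  next
    case 2
    thus ?thesis using prob_W_less_unit by (simp add: clamp01_def)
  next
    case 3
    have "PU.prob (space PU - {z. 1 \<le> W z}) \<le> PU.prob {z. W z < a}"
      using 3 by (intro PU.finite_measure_mono) auto
    moreover have "PU.prob (space PU - {z. 1 \<le> W z}) = 1"
      using prob_W_ge_1 by (subst PU.prob_compl) auto
    ultimately have "1 \<le> PU.prob {z. W z < a}" by simp
    moreover have "PU.prob {z. W z < a} \<le> 1" by simp
    ultimately show ?thesis using 3 by (simp add: clamp01_def)
  qed
qed

lemma prob_W_eq: "PU.prob {z. W z = a} = 0"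
proof -
  have "PU.prob {z. W z = a} \<le> 0 + e" if e: "e > 0" for e
  proof (cases "0 \<le> a \<and> a < 1")
    case True
    define t where "t = a + min e ((1 - a) / 2)"
    have "min e ((1 - a) / 2) \<le> (1 - a) / 2" "min e ((1 - a) / 2) \<le> e"
      by (rule min.cobounded2, rule min.cobounded1)
    hence t: "a < t" "t < 1" "t - a \<le> e" using e True by (auto simp: t_def)
    have "PU.prob {z. W z = a} \<le> PU.prob ({z. W z < t} - {z. W z < a})"
      using t by (intro PU.finite_measure_mono) auto
    also have "\<dots> = t - a"
      using t True by (subst PU.finite_measure_Diff) (auto simp: prob_W_less clamp01_def)
    finally show ?thesis using t by simp
  next
    case False
    hence "{z. W z = a} \<subseteq> {z. 1 \<le> W z}" using W_bounds by auto
    hence "PU.prob {z. W z = a} \<le> PU.prob {z. 1 \<le> W z}" by (intro PU.finite_measure_mono) auto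
    thus ?thesis using prob_W_ge_1 e by simp
  qed
  hence "PU.prob {z. W z = a} \<le> 0" by (rule field_le_epsilon)
  thus ?thesis by (simp add: order.antisym)
qed

lemma prob_W_le: "PU.prob {z. W z \<le> b} = clamp01 b"
proof -
  have "{z. W z \<le> b} = {z. W z < b} \<union> {z. W z = b}" by auto
  moreover have "PU.prob ({z. W z < b} \<union> {z. W z = b}) = PU.prob {z. W z < b} + PU.prob {z. W z = b}"
    by (rule PU.finite_measure_Union) auto
  ultimately show ?thesis using prob_W_less prob_W_eq by simp
qed

lemma prob_W_between: "PU.prob {z. a \<le> W z \<and> W z \<le> b} \<le> max 0 (b - a)"
proof (cases "a \<le> b")
  case True
  have "{z. a \<le> W z \<and> W z \<le> b} = {z. W z \<le> b} - {z. W z < a}" by auto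
  hence "PU.prob {z. a \<le> W z \<and> W z \<le> b} = clamp01 b - clamp01 a"
    using True by (simp add: PU.finite_measure_Diff prob_W_le prob_W_less subset_eq)
  also have "\<dots> \<le> b - a" using True by (auto simp: clamp01_def)
  finally show ?thesis by simp
next
  case False
  hence e: "{z. a \<le> W z \<and> W z \<le> b} = {}" by auto
  show ?thesis unfolding e by simp
qed

lemma AE_W_unit: "AE z in PU. 0 < W z \<and> W z < 1"
proof -
  have "W z = 0 \<or> W z = 1" if "\<not> (0 < W z \<and> W z < 1)" for z
    using that W_bounds[of z] by linarith
  hence "{z. \<not> (0 < W z \<and> W z < 1)} \<subseteq> {z. W z = 0} \<union> {z. W z = 1}" by blast
  hence "PU.prob {z. \<not> (0 < W z \<and> W z < 1)} \<le> PU.prob {z. W z = 0} + PU.prob {z. W z = 1}"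
    by (intro order_trans[OF PU.finite_measure_mono measure_Un_le]) auto
  hence E: "emeasure PU {z \<in> space PU. \<not> (0 < W z \<and> W z < 1)} = 0"
    by (simp add: prob_W_eq PU.emeasure_eq_measure measure_le_0_iff)
  have S: "{z \<in> space PU. \<not> (0 < W z \<and> W z < 1)} \<in> sets PU" by measurable
  show ?thesis by (rule AE_iff_measurable[OF S refl, THEN iffD2, OF E])
qed

end

section \<open>Optimality of the comonotone coupling\<close>

text \<open>\<open>(a - b)\<^sup>2\<close> is the area of the square \<open>[min a b, max a b)\<^sup>2\<close>.\<close>
definition square_kernel :: "real \<Rightarrow> real \<Rightarrow> real \<Rightarrow> real \<Rightarrow> ennreal" where
  "square_kernel a b s t = indicator ({a..<b} \<union> {b..<a}) s * indicator ({a..<b} \<union> {b..<a}) t"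

lemma square_kernel_alt:
  "square_kernel a b s t = (if a \<le> min s t \<and> max s t < b then 1 else 0)
    + (if b \<le> min s t \<and> max s t < a then 1 else 0)"
  unfolding square_kernel_def by (auto split: split_indicator split_min split_max)

lemma square_kernel_measurable [measurable]:
  "(\<lambda>x. square_kernel (f x) (g x) (h x) (k x)) \<in> borel_measurable M"
  if [measurable]: "f \<in> borel_measurable M" "g \<in> borel_measurable M"
    "h \<in> borel_measurable M" "k \<in> borel_measurable M"
  unfolding square_kernel_alt by measurable

lemma nn_integral_square_kernel:
  "(\<integral>\<^sup>+s. \<integral>\<^sup>+t. square_kernel a b s t \<partial>lborel \<partial>lborel) = ennreal ((a - b)\<^sup>2)"
proof -
  define S where "S = {a..<b} \<union> {b..<a}"
  have S: "S \<in> sets lborel" by (simp add: S_def)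
  have "emeasure lborel S = ennreal \<bar>b - a\<bar>"
    by (cases "a \<le> b") (simp_all add: S_def ivl_disj_un_two_touch)
  have inner: "(\<integral>\<^sup>+t. square_kernel a b s t \<partial>lborel) = ennreal \<bar>b - a\<bar> * indicator S s" for s
  proof -
    have "(\<integral>\<^sup>+t. square_kernel a b s t \<partial>lborel) = (\<integral>\<^sup>+t. indicator S s * indicator S t \<partial>lborel)"
      by (simp add: square_kernel_def S_def)
    also have "\<dots> = indicator S s * emeasure lborel S"
      using S by (rule nn_integral_cmult_indicator)
    finally show ?thesis using \<open>emeasure lborel S = _\<close> by (simp add: mult.commute)
  qed
  have "(\<integral>\<^sup>+s. \<integral>\<^sup>+t. square_kernel a b s t \<partial>lborel \<partial>lborel) = ennreal \<bar>b - a\<bar> * ennreal \<bar>b - a\<bar>"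
    using S \<open>emeasure lborel S = _\<close> by (simp only: inner nn_integral_cmult_indicator)
  also have "\<dots> = ennreal ((a - b)\<^sup>2)"
    by (simp add: ennreal_mult[symmetric] abs_mult_self_eq power2_eq_square algebra_simps)
  finally show ?thesis .
qed

lemma nn_integral_square_diff_eq:
  assumes "sigma_finite_measure M" and [measurable]: "A \<in> borel_measurable M" "B \<in> borel_measurable M"
  shows "(\<integral>\<^sup>+\<omega>. ennreal ((A \<omega> - B \<omega>)\<^sup>2) \<partial>M) =
    (\<integral>\<^sup>+s. \<integral>\<^sup>+t. emeasure M {\<omega>\<in>space M. A \<omega> \<le> min s t \<and> max s t < B \<omega>}
       + emeasure M {\<omega>\<in>space M. B \<omega> \<le> min s t \<and> max s t < A \<omega>} \<partial>lborel \<partial>lborel)"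
proof -
  interpret M: sigma_finite_measure M by fact
  interpret P: pair_sigma_finite M lborel by unfold_locales
  have "(\<integral>\<^sup>+\<omega>. ennreal ((A \<omega> - B \<omega>)\<^sup>2) \<partial>M)
      = (\<integral>\<^sup>+\<omega>. \<integral>\<^sup>+s. \<integral>\<^sup>+t. square_kernel (A \<omega>) (B \<omega>) s t \<partial>lborel \<partial>lborel \<partial>M)"
    by (simp only: nn_integral_square_kernel)
  also have "\<dots> = (\<integral>\<^sup>+s. \<integral>\<^sup>+\<omega>. \<integral>\<^sup>+t. square_kernel (A \<omega>) (B \<omega>) s t \<partial>lborel \<partial>M \<partial>lborel)"
  proof (rule P.Fubini'[symmetric])
    have "(\<lambda>x. square_kernel (A (fst (fst x))) (B (fst (fst x))) (snd (fst x)) (snd x))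
        \<in> borel_measurable ((M \<Otimes>\<^sub>M lborel) \<Otimes>\<^sub>M lborel)" by measurable
    from lborel.borel_measurable_nn_integral_fst[OF this]
    show "case_prod (\<lambda>\<omega> s. \<integral>\<^sup>+t. square_kernel (A \<omega>) (B \<omega>) s t \<partial>lborel) \<in> borel_measurable (M \<Otimes>\<^sub>M lborel)"
      by (simp add: case_prod_beta')
  qed
  also have "\<dots> = (\<integral>\<^sup>+s. \<integral>\<^sup>+t. \<integral>\<^sup>+\<omega>. square_kernel (A \<omega>) (B \<omega>) s t \<partial>M \<partial>lborel \<partial>lborel)"
  proof (intro nn_integral_cong P.Fubini'[symmetric])
    fix s
    have "(\<lambda>x. square_kernel (A (fst x)) (B (fst x)) s (snd x)) \<in> borel_measurable (M \<Otimes>\<^sub>M lborel)"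
      by measurable
    thus "case_prod (\<lambda>\<omega> t. square_kernel (A \<omega>) (B \<omega>) s t) \<in> borel_measurable (M \<Otimes>\<^sub>M lborel)"
      by (simp add: case_prod_beta')
  qed
  also have "\<dots> = (\<integral>\<^sup>+s. \<integral>\<^sup>+t. emeasure M {\<omega>\<in>space M. A \<omega> \<le> min s t \<and> max s t < B \<omega>}
       + emeasure M {\<omega>\<in>space M. B \<omega> \<le> min s t \<and> max s t < A \<omega>} \<partial>lborel \<partial>lborel)"
  proof (intro nn_integral_cong)
    fix s t
    have "{\<omega>\<in>space M. A \<omega> \<le> min s t \<and> max s t < B \<omega>} \<in> sets M"
      "{\<omega>\<in>space M. B \<omega> \<le> min s t \<and> max s t < A \<omega>} \<in> sets M" by measurable
    moreover have "(\<integral>\<^sup>+\<omega>. square_kernel (A \<omega>) (B \<omega>) s t \<partial>M)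
      = (\<integral>\<^sup>+\<omega>. indicator {\<omega>\<in>space M. A \<omega> \<le> min s t \<and> max s t < B \<omega>} \<omega>
         + indicator {\<omega>\<in>space M. B \<omega> \<le> min s t \<and> max s t < A \<omega>} \<omega> \<partial>M)"
      by (intro nn_integral_cong) (simp add: square_kernel_alt indicator_def)
    ultimately show "(\<integral>\<^sup>+\<omega>. square_kernel (A \<omega>) (B \<omega>) s t \<partial>M)
      = emeasure M {\<omega>\<in>space M. A \<omega> \<le> min s t \<and> max s t < B \<omega>}
       + emeasure M {\<omega>\<in>space M. B \<omega> \<le> min s t \<and> max s t < A \<omega>}"
      by (simp add: nn_integral_add)
  qed
  finally show ?thesis .
qed

lemma nn_integral_square_diff_mono:
  assumes "sigma_finite_measure M1" "sigma_finite_measure M2"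
    and [measurable]: "A1 \<in> borel_measurable M1" "B1 \<in> borel_measurable M1"
      "A2 \<in> borel_measurable M2" "B2 \<in> borel_measurable M2"
    and "\<And>u v. emeasure M1 {\<omega>\<in>space M1. A1 \<omega> \<le> u \<and> v < B1 \<omega>}
      \<le> emeasure M2 {\<omega>\<in>space M2. A2 \<omega> \<le> u \<and> v < B2 \<omega>}"
    and "\<And>u v. emeasure M1 {\<omega>\<in>space M1. B1 \<omega> \<le> u \<and> v < A1 \<omega>}
      \<le> emeasure M2 {\<omega>\<in>space M2. B2 \<omega> \<le> u \<and> v < A2 \<omega>}"
  shows "(\<integral>\<^sup>+\<omega>. ennreal ((A1 \<omega> - B1 \<omega>)\<^sup>2) \<partial>M1) \<le> (\<integral>\<^sup>+\<omega>. ennreal ((A2 \<omega> - B2 \<omega>)\<^sup>2) \<partial>M2)"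
  unfolding nn_integral_square_diff_eq[OF assms(1,3,4)] nn_integral_square_diff_eq[OF assms(2,5,6)]
  by (intro nn_integral_mono add_mono assms(7,8))

lemma couplingD:
  assumes "\<gamma> \<in> couplings q p"
  shows "prob_space \<gamma>" "sets \<gamma> = sets (borel \<Otimes>\<^sub>M borel)" "space \<gamma> = UNIV"
    "measure \<gamma> {x. fst x \<le> s} = measure q {..s}" "measure \<gamma> {x. snd x \<le> s} = measure p {..s}"
proof -
  show "prob_space \<gamma>" and sg: "sets \<gamma> = sets (borel \<Otimes>\<^sub>M borel)"
    using assms by (auto simp: couplings_def joint_distr_def)
  show sp: "space \<gamma> = UNIV" using sets_eq_imp_space_eq[OF sg] by (simp add: space_pair_measure)
  have "fst \<in> measurable \<gamma> borel" "snd \<in> measurable \<gamma> borel"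
    by (auto simp: measurable_cong_sets[OF sg refl])
  thus "measure \<gamma> {x. fst x \<le> s} = measure q {..s}" "measure \<gamma> {x. snd x \<le> s} = measure p {..s}"
    using assms sp by (auto simp: couplings_def measure_distr vimage_def)
qed

lemma sets_coupling_Collect:
  "\<gamma> \<in> couplings q p \<Longrightarrow> Measurable.pred (borel \<Otimes>\<^sub>M borel) P \<Longrightarrow> {x. P x} \<in> sets \<gamma>"
proof -
  assume \<gamma>: "\<gamma> \<in> couplings q p" and [measurable]: "Measurable.pred (borel \<Otimes>\<^sub>M borel) P"
  have "{x \<in> space (borel \<Otimes>\<^sub>M borel). P x} \<in> sets (borel \<Otimes>\<^sub>M borel)" by measurable
  thus ?thesis using couplingD(2)[OF \<gamma>] by (simp add: space_pair_measure)
qed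

lemma measure_diff_le_measure_Diff:
  assumes "finite_measure M" "A \<in> sets M" "B \<in> sets M"
  shows "measure M A - measure M B \<le> measure M (A - B)"
proof -
  interpret finite_measure M by fact
  have "measure M A \<le> measure M ((A - B) \<union> B)" using assms by (intro finite_measure_mono) auto
  also have "\<dots> \<le> measure M (A - B) + measure M B" using assms by (intro measure_Un_le) auto
  finally show ?thesis by simp
qed

lemma coupling_frechet_lower:
  assumes \<gamma>: "\<gamma> \<in> couplings q p"
  shows "measure q {..s} - measure p {..t} \<le> measure \<gamma> {x. fst x \<le> s \<and> t < snd x}"
    and "measure p {..s} - measure q {..t} \<le> measure \<gamma> {x. snd x \<le> s \<and> t < fst x}"
proof -
  have fin: "finite_measure \<gamma>" using couplingD(1)[OF \<gamma>] by (rule prob_space.axioms(1))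
  have sets: "{x. fst x \<le> a} \<in> sets \<gamma>" "{x. snd x \<le> a} \<in> sets \<gamma>" for a :: real
    by (rule sets_coupling_Collect[OF \<gamma>], measurable)+
  have "measure \<gamma> {x. fst x \<le> s} - measure \<gamma> {x. snd x \<le> t}
      \<le> measure \<gamma> ({x. fst x \<le> s} - {x. snd x \<le> t})"
    "measure \<gamma> {x. snd x \<le> s} - measure \<gamma> {x. fst x \<le> t}
      \<le> measure \<gamma> ({x. snd x \<le> s} - {x. fst x \<le> t})"
    by (rule measure_diff_le_measure_Diff[OF fin sets(1) sets(2)],
        rule measure_diff_le_measure_Diff[OF fin sets(2) sets(1)])
  moreover have "{x. fst x \<le> s} - {x. snd x \<le> t} = {x. fst x \<le> s \<and> t < snd x}"
    "{x. snd x \<le> s} - {x. fst x \<le> t} = {x. snd x \<le> s \<and> t < fst x}" by auto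
  ultimately show "measure q {..s} - measure p {..t} \<le> measure \<gamma> {x. fst x \<le> s \<and> t < snd x}"
    "measure p {..s} - measure q {..t} \<le> measure \<gamma> {x. snd x \<le> s \<and> t < fst x}"
    by (simp_all add: couplingD(4,5)[OF \<gamma>])
qed

locale gaussian_coupling = gaussian_law \<mu> \<sigma> + real_law p for \<mu> \<sigma> p
begin

definition G :: "real \<times> real \<Rightarrow> real" where "G z = Phiinv (W z)"

lemma G_measurable [measurable]: "G \<in> borel_measurable (borel \<Otimes>\<^sub>M borel)"
  unfolding G_def by measurable

lemma distr_G: "distr PU borel G = N"
proof (rule cdf_unique)
  show "real_distribution (distr PU borel G)" by (rule PU.real_distribution_distr) simp
  show "real_distribution N" by (rule real_distribution_N)
  show "cdf (distr PU borel G) = cdf N"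
  proof
    fix s
    have "cdf (distr PU borel G) s = PU.prob {z. G z \<le> s}"
      by (simp add: cdf_def measure_distr vimage_def)
    also have "\<dots> = PU.prob {z. W z \<le> Phi s}"
    proof (rule PU.finite_measure_eq_AE)
      show "AE z in PU. (z \<in> {z. G z \<le> s}) = (z \<in> {z. W z \<le> Phi s})"
        using AE_W_unit by eventually_elim (simp add: G_def Phiinv_le_iff)
      show "{z. G z \<le> s} \<in> sets PU" by (rule sets_PU_Collect) measurable
    qed (simp add: sets_PU)
    also have "\<dots> = Phi s" using Phi_pos[of s] Phi_less_1[of s] by (simp add: prob_W_le clamp01_def)
    finally show "cdf (distr PU borel G) s = cdf N s" by (simp add: Phi_eq_cdf)
  qed
qed

text \<open>The Frechet lower bounds for \<open>\<gamma>\<close> are attained by the comonotone pair \<open>(G, fst)\<close>.\<close>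
lemma prob_G_le_fst_gt:
  assumes \<gamma>: "\<gamma> \<in> couplings N p"
  shows "PU.prob {z. G z \<le> s \<and> t < fst z} \<le> measure \<gamma> {x. fst x \<le> s \<and> t < snd x}"
proof -
  have "PU.prob {z. G z \<le> s \<and> t < fst z} \<le> PU.prob {z. F t \<le> W z \<and> W z \<le> Phi s}"
    using AE_W_unit
  proof (intro PU.finite_measure_mono_AE, eventually_elim)
    case (elim z)
    thus ?case using F_le_F_left[of t "fst z"] F_left_le_W[of "fst z" "snd z"]
      by (auto simp: G_def Phiinv_le_iff)
  qed (rule sets_PU_Collect, measurable)+
  also have "\<dots> \<le> max 0 (Phi s - F t)" by (rule prob_W_between)
  also have "\<dots> \<le> measure \<gamma> {x. fst x \<le> s \<and> t < snd x}"
    using coupling_frechet_lower(1)[OF \<gamma>, of s t] by (simp add: Phi_def F_def)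
  finally show ?thesis .
qed

lemma prob_fst_le_G_gt:
  assumes \<gamma>: "\<gamma> \<in> couplings N p"
  shows "PU.prob {z. fst z \<le> s \<and> t < G z} \<le> measure \<gamma> {x. snd x \<le> s \<and> t < fst x}"
proof -
  have "PU.prob {z. fst z \<le> s \<and> t < G z} \<le> PU.prob {z. Phi t \<le> W z \<and> W z \<le> F s}"
    using AE_W_unit
  proof (intro PU.finite_measure_mono_AE, eventually_elim)
    case (elim z)
    thus ?case using F_mono[of "fst z" s] W_le_F[of "fst z" "snd z"]
      by (auto simp: G_def less_Phiinv_iff)
  qed (rule sets_PU_Collect, measurable)+
  also have "\<dots> \<le> max 0 (F s - Phi t)" by (rule prob_W_between)
  also have "\<dots> \<le> measure \<gamma> {x. snd x \<le> s \<and> t < fst x}"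
    using coupling_frechet_lower(2)[OF \<gamma>, of s t] by (simp add: Phi_def F_def)
  finally show ?thesis .
qed

lemma nn_integral_G_le_coupling:
  assumes \<gamma>: "\<gamma> \<in> couplings N p"
  shows "(\<integral>\<^sup>+z. ennreal ((G z - fst z)\<^sup>2) \<partial>PU) \<le> (\<integral>\<^sup>+x. ennreal ((fst x - snd x)\<^sup>2) \<partial>\<gamma>)"
proof (rule nn_integral_square_diff_mono)
  interpret \<Gamma>: prob_space \<gamma> by (rule couplingD(1)[OF \<gamma>])
  have sg: "sets \<gamma> = sets (borel \<Otimes>\<^sub>M borel)" by (rule couplingD(2)[OF \<gamma>])
  show "sigma_finite_measure PU" "sigma_finite_measure \<gamma>" by unfold_locales
  show "G \<in> borel_measurable PU" "fst \<in> borel_measurable PU" by measurable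
  show "fst \<in> borel_measurable \<gamma>" "snd \<in> borel_measurable \<gamma>"
    by (simp_all add: measurable_cong_sets[OF sg refl])
  fix u v
  show "emeasure PU {\<omega> \<in> space PU. G \<omega> \<le> u \<and> v < fst \<omega>}
      \<le> emeasure \<gamma> {\<omega> \<in> space \<gamma>. fst \<omega> \<le> u \<and> v < snd \<omega>}"
    "emeasure PU {\<omega> \<in> space PU. fst \<omega> \<le> u \<and> v < G \<omega>}
      \<le> emeasure \<gamma> {\<omega> \<in> space \<gamma>. snd \<omega> \<le> u \<and> v < fst \<omega>}"
    using prob_G_le_fst_gt[OF \<gamma>, of u v] prob_fst_le_G_gt[OF \<gamma>, of u v]
    by (simp_all add: PU.emeasure_eq_measure \<Gamma>.emeasure_eq_measure couplingD(3)[OF \<gamma>])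
qed

end

context gaussian_coupling
begin

lemma integrable_G_square: "integrable PU (\<lambda>z. (G z)\<^sup>2)"
  using integrable_N_square unfolding distr_G[symmetric] by (subst (asm) integrable_distr_eq) auto

lemma integral_G: "g \<in> borel_measurable borel \<Longrightarrow> (\<integral>z. g (G z) \<partial>PU) = (\<integral>x. g x \<partial>N)"
  for g :: "real \<Rightarrow> real"
  unfolding distr_G[symmetric] by (subst integral_distr) auto

lemma integrable_fst_square: "integrable p (\<lambda>x. x\<^sup>2) \<Longrightarrow> integrable PU (\<lambda>z. (fst z)\<^sup>2)"
proof -
  assume "integrable p (\<lambda>x. x\<^sup>2)"
  hence "integrable (distr PU borel fst) (\<lambda>x. x\<^sup>2)" by (simp only: distr_PU_fst)
  thus ?thesis by (subst (asm) integrable_distr_eq) auto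
qed

lemma integral_fst: "(\<integral>z. fst z \<partial>PU) = (\<integral>x. x \<partial>p)"
proof -
  have "(\<integral>z. fst z \<partial>PU) = (\<integral>x. x \<partial>distr PU borel fst)" by (subst integral_distr) auto
  thus ?thesis by (simp only: distr_PU_fst)
qed

lemma integral_G_fst_shift_square:
  assumes p2: "integrable p (\<lambda>x. x\<^sup>2)"
  shows "(\<integral>z. (G z - fst z - c)\<^sup>2 \<partial>PU)
    = (\<integral>z. (G z - fst z)\<^sup>2 \<partial>PU) - 2 * c * (\<mu> - (\<integral>x. x \<partial>p)) + c\<^sup>2"
proof -
  have iG: "integrable PU G" and iY: "integrable PU fst"
    using integrable_G_square integrable_fst_square[OF p2]
    by (auto intro: PU.integrable_of_integrable_square)
  have iD: "integrable PU (\<lambda>z. (G z - fst z - 0)\<^sup>2)"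
    using integrable_G_square integrable_fst_square[OF p2] by (intro PU.integrable_square_diff) auto
  have "(\<integral>z. (G z - fst z - c)\<^sup>2 \<partial>PU)
      = (\<integral>z. (G z - fst z - 0)\<^sup>2 - 2 * c * (G z - fst z) + c\<^sup>2 \<partial>PU)"
    by (rule Bochner_Integration.integral_cong) (simp_all add: power2_diff)
  also have "\<dots> = (\<integral>z. (G z - fst z)\<^sup>2 \<partial>PU) - 2 * c * ((\<integral>z. G z \<partial>PU) - (\<integral>z. fst z \<partial>PU)) + c\<^sup>2"
    using iD iG iY by (simp add: PU.prob_space[unfolded space_PU])
  finally show ?thesis using integral_G[of "\<lambda>x. x"] integral_N_id integral_fst by simp
qed

end

section \<open>Mutual information and the distortion-rate function\<close>

lemma mutual_info_le_density:
  assumes jd: "joint_distr \<pi>" and MI: "mutual_info \<pi> \<le> ereal r"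
  obtains f where "f \<in> borel_measurable (borel \<Otimes>\<^sub>M borel)" "\<And>x. 0 \<le> f x"
    "density (distr \<pi> borel fst \<Otimes>\<^sub>M distr \<pi> borel snd) (\<lambda>x. ennreal (f x)) = \<pi>"
    "integrable \<pi> (\<lambda>x. ln (f x))" "(\<integral>x. ln (f x) \<partial>\<pi>) \<le> r"
proof -
  interpret \<Pi>: prob_space \<pi> using jd by (simp add: joint_distr_def)
  have s\<pi>: "sets \<pi> = sets (borel \<Otimes>\<^sub>M borel)" using jd by (simp add: joint_distr_def)
  have "fst \<in> measurable \<pi> borel" "snd \<in> measurable \<pi> borel"
    by (simp_all add: measurable_cong_sets[OF s\<pi> refl])
  hence "prob_space (distr \<pi> borel fst)" "prob_space (distr \<pi> borel snd)"
    by (simp_all add: \<Pi>.prob_space_distr)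
  define \<nu> where "\<nu> = distr \<pi> borel fst \<Otimes>\<^sub>M distr \<pi> borel snd"
  interpret \<nu>: prob_space \<nu>
    unfolding \<nu>_def using \<open>prob_space (distr \<pi> borel fst)\<close> \<open>prob_space (distr \<pi> borel snd)\<close>
    by (simp add: prob_space_pair pair_prob_space.intro)
  have s\<nu>: "sets \<nu> = sets (borel \<Otimes>\<^sub>M borel)"
    unfolding \<nu>_def by (intro sets_pair_measure_cong) auto
  define RN where "RN = RN_deriv \<nu> \<pi>"
  have ac: "absolutely_continuous \<nu> \<pi>" and il: "integrable \<pi> (\<lambda>x. ln (enn2real (RN x)))"
    and le: "(\<integral>x. ln (enn2real (RN x)) \<partial>\<pi>) \<le> r"
    using MI unfolding mutual_info_def Let_def \<nu>_def[symmetric] RN_def[symmetric]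
    by (auto split: if_splits)
  have RN_measurable: "RN \<in> borel_measurable (borel \<Otimes>\<^sub>M borel)"
    using borel_measurable_RN_deriv[of \<nu> \<pi>] by (simp add: RN_def measurable_cong_sets[OF s\<nu> refl])
  have "density \<nu> (\<lambda>x. ennreal (enn2real (RN x))) = density \<nu> RN"
  proof (rule density_cong)
    have "AE x in \<nu>. RN x \<noteq> \<infinity>"
      unfolding RN_def using ac s\<pi> s\<nu>
      by (intro \<nu>.RN_deriv_finite) (auto simp: prob_space_imp_sigma_finite \<Pi>.prob_space_axioms)
    thus "AE x in \<nu>. ennreal (enn2real (RN x)) = RN x"
      by eventually_elim (simp add: less_top[symmetric])
  qed (use RN_measurable in \<open>simp_all add: measurable_cong_sets[OF s\<nu> refl]\<close>)
  also have "\<dots> = \<pi>" unfolding RN_def using ac s\<pi> s\<nu> by (intro \<nu>.density_RN_deriv) auto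
  finally show ?thesis
    using RN_measurable il le by (intro that[of "\<lambda>x. enn2real (RN x)"]) (simp_all add: \<nu>_def)
qed

lemma mutual_info_pair_measure:
  assumes "real_distr p" "real_distr q"
  shows "mutual_info (p \<Otimes>\<^sub>M q) = 0"
proof -
  have p: "prob_space p" "sets p = sets borel" and q: "prob_space q" "sets q = sets borel"
    using assms by (simp_all add: real_distr_def)
  interpret PQ: pair_prob_space p q
    using p q by (simp add: pair_prob_space_def pair_sigma_finite_def prob_space_imp_sigma_finite)
  have marginals: "distr (p \<Otimes>\<^sub>M q) borel fst \<Otimes>\<^sub>M distr (p \<Otimes>\<^sub>M q) borel snd = p \<Otimes>\<^sub>M q"
    using p q by (simp add: distr_pair_fst_sets_eq distr_pair_snd prob_space_imp_sigma_finite)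
  have "AE x in p \<Otimes>\<^sub>M q. 1 = RN_deriv (p \<Otimes>\<^sub>M q) (p \<Otimes>\<^sub>M q) x"
    by (rule PQ.RN_deriv_unique) (simp_all add: density_1)
  hence ae: "AE x in p \<Otimes>\<^sub>M q. ln (enn2real (RN_deriv (p \<Otimes>\<^sub>M q) (p \<Otimes>\<^sub>M q) x)) = 0"
    by (auto elim!: eventually_mono simp: eq_commute[of 1])
  have "integrable (p \<Otimes>\<^sub>M q) (\<lambda>x. ln (enn2real (RN_deriv (p \<Otimes>\<^sub>M q) (p \<Otimes>\<^sub>M q) x)))"
    using ae by (intro integrable_cong_AE_imp[OF integrable_zero]) (auto simp: eq_commute[of 0])
  moreover have "(\<integral>x. ln (enn2real (RN_deriv (p \<Otimes>\<^sub>M q) (p \<Otimes>\<^sub>M q) x)) \<partial>(p \<Otimes>\<^sub>M q))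
      = (\<integral>x. 0 \<partial>(p \<Otimes>\<^sub>M q))"
    by (rule integral_cong_AE) (use ae in auto)
  ultimately show ?thesis
    unfolding mutual_info_def Let_def marginals by (simp add: absolutely_continuous_def zero_ereal_def)
qed

lemma le_distortion_rate:
  assumes p: "real_distr p" and p2: "integrable p (\<lambda>x. x\<^sup>2)" and r: "r \<ge> 0"
    and bound: "\<And>\<pi>. joint_distr \<pi> \<Longrightarrow> distr \<pi> borel fst = p \<Longrightarrow> mutual_info \<pi> \<le> ereal r \<Longrightarrow>
      integrable \<pi> (\<lambda>x. (fst x - snd x)\<^sup>2) \<Longrightarrow> L \<le> (\<integral>x. (fst x - snd x)\<^sup>2 \<partial>\<pi>)"
  shows "L \<le> distortion_rate r p"
proof -
  define F where "F = {\<pi>. joint_distr \<pi> \<and> distr \<pi> borel fst = p \<and>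
    mutual_info \<pi> \<le> ereal r \<and> integrable \<pi> (\<lambda>x. (fst x - snd x)\<^sup>2)}"
  have D: "distortion_rate r p = Inf ((\<lambda>\<pi>. \<integral>x. (fst x - snd x)\<^sup>2 \<partial>\<pi>) ` F)"
    unfolding distortion_rate_def F_def by (simp only: setcompr_eq_image)
  interpret P: prob_space p using p by (simp add: real_distr_def)
  interpret PP: pair_prob_space p p by (simp add: pair_prob_space_def pair_sigma_finite_def
      prob_space_imp_sigma_finite P.prob_space_axioms)
  have sp [measurable_cong]: "sets p = sets borel" using p by (simp add: real_distr_def)
  have s [measurable_cong]: "sets (p \<Otimes>\<^sub>M p) = sets (borel \<Otimes>\<^sub>M borel)"
    by (intro sets_pair_measure_cong) (simp_all add: sp)
  have d: "distr (p \<Otimes>\<^sub>M p) borel fst = p" "distr (p \<Otimes>\<^sub>M p) borel snd = p"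
    using sp by (simp_all add: distr_pair_fst_sets_eq distr_pair_snd prob_space_imp_sigma_finite P.prob_space_axioms)
  have "integrable (p \<Otimes>\<^sub>M p) (\<lambda>x. (fst x - snd x - 0)\<^sup>2)"
  proof (rule PP.integrable_square_diff)
    have "integrable (distr (p \<Otimes>\<^sub>M p) borel fst) (\<lambda>x. x\<^sup>2)"
      using p2 by (simp only: d)
    thus "integrable (p \<Otimes>\<^sub>M p) (\<lambda>x. (fst x)\<^sup>2)" by (subst (asm) integrable_distr_eq) auto
    have "integrable (distr (p \<Otimes>\<^sub>M p) borel snd) (\<lambda>x. x\<^sup>2)"
      using p2 by (simp only: d)
    thus "integrable (p \<Otimes>\<^sub>M p) (\<lambda>x. (snd x)\<^sup>2)" by (subst (asm) integrable_distr_eq) auto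
  qed simp_all
  moreover have "joint_distr (p \<Otimes>\<^sub>M p)"
    by (simp add: joint_distr_def s PP.prob_space_axioms)
  ultimately have "p \<Otimes>\<^sub>M p \<in> F"
    using d(1) mutual_info_pair_measure[OF p p] r by (simp add: F_def)
  hence "F \<noteq> {}" by blast
  thus ?thesis unfolding D by (intro cInf_greatest) (auto simp: F_def intro: bound)
qed

context gaussian_coupling
begin

lemma integrable_coupling_square_diff:
  assumes \<gamma>: "\<gamma> \<in> couplings N p" and p2: "integrable p (\<lambda>x. x\<^sup>2)"
  shows "integrable \<gamma> (\<lambda>x. (fst x - snd x)\<^sup>2)"
proof -
  interpret \<Gamma>: prob_space \<gamma> by (rule couplingD(1)[OF \<gamma>])
  have sg: "sets \<gamma> = sets (borel \<Otimes>\<^sub>M borel)" by (rule couplingD(2)[OF \<gamma>])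
  have [measurable]: "fst \<in> borel_measurable \<gamma>" "snd \<in> borel_measurable \<gamma>"
    by (simp_all add: measurable_cong_sets[OF sg refl])
  have "integrable (distr \<gamma> borel fst) (\<lambda>x. x\<^sup>2)" "integrable (distr \<gamma> borel snd) (\<lambda>x. x\<^sup>2)"
    using \<gamma> integrable_N_square p2 by (auto simp: couplings_def)
  hence "integrable \<gamma> (\<lambda>x. (fst x)\<^sup>2)" "integrable \<gamma> (\<lambda>x. (snd x)\<^sup>2)"
    by (simp_all add: integrable_distr_eq)
  from \<Gamma>.integrable_square_diff[OF _ _ this, of 0] show ?thesis by simp
qed

lemma N_p_in_couplings: "N \<Otimes>\<^sub>M p \<in> couplings N p"
proof -
  interpret NP: pair_prob_space N p
    using prob_space_N prob_space_p
    by (simp add: pair_prob_space_def pair_sigma_finite_def prob_space_imp_sigma_finite)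
  show ?thesis
    unfolding couplings_def joint_distr_def
    using NP.prob_space_axioms prob_space_N prob_space_p
    by (auto intro!: sets_pair_measure_cong distr_pair_fst_sets_eq distr_pair_snd simp: prob_space_imp_sigma_finite)
qed

lemma integral_G_fst_square_le_W2sq:
  assumes p2: "integrable p (\<lambda>x. x\<^sup>2)"
  shows "(\<integral>z. (G z - fst z)\<^sup>2 \<partial>PU) \<le> W2sq N p"
  unfolding W2sq_def
proof (rule cINF_greatest)
  show "couplings N p \<noteq> {}" using N_p_in_couplings by blast
  fix \<gamma> assume \<gamma>: "\<gamma> \<in> couplings N p"
  have "integrable PU (\<lambda>z. (G z - fst z - 0)\<^sup>2)"
    using integrable_G_square integrable_fst_square[OF p2] by (intro PU.integrable_square_diff) auto
  hence "ennreal (\<integral>z. (G z - fst z)\<^sup>2 \<partial>PU) = (\<integral>\<^sup>+z. ennreal ((G z - fst z)\<^sup>2) \<partial>PU)"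
    by (simp add: nn_integral_eq_integral)
  also have "\<dots> \<le> (\<integral>\<^sup>+x. ennreal ((fst x - snd x)\<^sup>2) \<partial>\<gamma>)" by (rule nn_integral_G_le_coupling[OF \<gamma>])
  also have "\<dots> = ennreal (\<integral>x. (fst x - snd x)\<^sup>2 \<partial>\<gamma>)"
    using integrable_coupling_square_diff[OF \<gamma> p2] by (simp add: nn_integral_eq_integral)
  finally show "(\<integral>z. (G z - fst z)\<^sup>2 \<partial>PU) \<le> (\<integral>x. (fst x - snd x)\<^sup>2 \<partial>\<gamma>)"
    by (rule ennreal_le_iff[THEN iffD1, rotated]) simp
qed

lemma integral_G_fst_centered_square_le:
  assumes p2: "integrable p (\<lambda>x. x\<^sup>2)" and c: "c = \<mu> - (\<integral>x. x \<partial>p)"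
  shows "(\<integral>z. (G z - fst z - c)\<^sup>2 \<partial>PU) \<le> W2sq N p - c\<^sup>2"
  using integral_G_fst_shift_square[OF p2, of c, unfolded c[symmetric]]
    integral_G_fst_square_le_W2sq[OF p2]
  by (simp add: power2_eq_square)

end

section \<open>The Gaussian lower bound for the reconstruction error\<close>

context gaussian_coupling
begin

lemma distr_pair_U_eq_PU:
  assumes "joint_distr \<pi>" "distr \<pi> borel fst = p"
  shows "distr (\<pi> \<Otimes>\<^sub>M U) (borel \<Otimes>\<^sub>M U) (\<lambda>\<omega>. (fst (fst \<omega>), snd \<omega>)) = PU"
proof -
  have s\<pi> [measurable_cong]: "sets \<pi> = sets (borel \<Otimes>\<^sub>M borel)" using assms(1) by (simp add: joint_distr_def)
  have "distr \<pi> borel fst \<Otimes>\<^sub>M distr U U (\<lambda>u. u)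
      = distr (\<pi> \<Otimes>\<^sub>M U) (borel \<Otimes>\<^sub>M U) (\<lambda>(x, u). (fst x, u))"
    by (rule pair_measure_distr) (auto simp: prob_space_imp_sigma_finite prob_space_U)
  thus ?thesis using assms(2) by (simp add: case_prod_beta')
qed

lemma integral_pair_U_G:
  fixes g :: "real \<Rightarrow> real"
  assumes "joint_distr \<pi>" "distr \<pi> borel fst = p" and [measurable]: "g \<in> borel_measurable borel"
  shows "integrable (\<pi> \<Otimes>\<^sub>M U) (\<lambda>\<omega>. g (G (fst (fst \<omega>), snd \<omega>))) \<longleftrightarrow> integrable N g"
    and "(\<integral>\<omega>. g (G (fst (fst \<omega>), snd \<omega>)) \<partial>(\<pi> \<Otimes>\<^sub>M U)) = (\<integral>x. g x \<partial>N)"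
proof -
  have s\<pi> [measurable_cong]: "sets \<pi> = sets (borel \<Otimes>\<^sub>M borel)" using assms(1) by (simp add: joint_distr_def)
  have d: "distr (\<pi> \<Otimes>\<^sub>M U) borel (\<lambda>\<omega>. G (fst (fst \<omega>), snd \<omega>)) = N"
    unfolding distr_G[symmetric] distr_pair_U_eq_PU[OF assms(1,2), symmetric]
    by (subst distr_distr) (auto simp: comp_def)
  show "integrable (\<pi> \<Otimes>\<^sub>M U) (\<lambda>\<omega>. g (G (fst (fst \<omega>), snd \<omega>))) \<longleftrightarrow> integrable N g"
    using integrable_distr_eq[of "\<lambda>\<omega>. G (fst (fst \<omega>), snd \<omega>)" "\<pi> \<Otimes>\<^sub>M U" borel g] by (simp add: d)
  show "(\<integral>\<omega>. g (G (fst (fst \<omega>), snd \<omega>)) \<partial>(\<pi> \<Otimes>\<^sub>M U)) = (\<integral>x. g x \<partial>N)"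
    using integral_distr[of "\<lambda>\<omega>. G (fst (fst \<omega>), snd \<omega>)" "\<pi> \<Otimes>\<^sub>M U" borel g] by (simp add: d)
qed

end

context gaussian_coupling
begin

text \<open>Under \<open>p \<otimes> q \<otimes> U\<close> the Gaussian \<open>G\<close> is independent of the second coordinate.\<close>
lemma nn_integral_exp_log_likelihood_ratio:
  assumes q: "prob_space q" "sets q = sets borel" and D: "D > 0"
  shows "(\<integral>\<^sup>+\<omega>. ennreal (exp ((G (fst (fst \<omega>), snd \<omega>) - \<mu>)\<^sup>2 / (2 * \<sigma>\<^sup>2)
      - (G (fst (fst \<omega>), snd \<omega>) - (c + snd (fst \<omega>)))\<^sup>2 / (2 * D))) \<partial>((p \<Otimes>\<^sub>M q) \<Otimes>\<^sub>M U))
    = ennreal (sqrt D / \<sigma>)"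
proof -
  interpret Q: prob_space q by (rule q(1))
  interpret U: prob_space U by (rule prob_space_U)
  interpret PQ: pair_prob_space p q
    by (simp add: pair_prob_space_def pair_sigma_finite_def prob_space_imp_sigma_finite P.prob_space_axioms q(1))
  have [measurable_cong]: "sets q = sets borel" by (rule q(2))
  define h where "h v x = ennreal (exp ((x - \<mu>)\<^sup>2 / (2 * \<sigma>\<^sup>2) - (x - (c + v))\<^sup>2 / (2 * D)))" for v x
  have [measurable]: "case_prod h \<in> borel_measurable (borel \<Otimes>\<^sub>M borel)" unfolding h_def by measurable
  define F where "F \<omega> = h (snd (fst \<omega>)) (G (fst (fst \<omega>), snd \<omega>))" for \<omega>
  have "(\<integral>\<^sup>+z. \<integral>\<^sup>+u. F (z, u) \<partial>U \<partial>(p \<Otimes>\<^sub>M q)) = (\<integral>\<^sup>+\<omega>. F \<omega> \<partial>((p \<Otimes>\<^sub>M q) \<Otimes>\<^sub>M U))"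
    by (rule U.nn_integral_fst) (simp add: F_def h_def)
  hence "(\<integral>\<^sup>+\<omega>. h (snd (fst \<omega>)) (G (fst (fst \<omega>), snd \<omega>)) \<partial>((p \<Otimes>\<^sub>M q) \<Otimes>\<^sub>M U))
      = (\<integral>\<^sup>+z. \<integral>\<^sup>+u. h (snd z) (G (fst z, u)) \<partial>U \<partial>(p \<Otimes>\<^sub>M q))"
    by (simp add: F_def)
  also have "\<dots> = (\<integral>\<^sup>+v. \<integral>\<^sup>+y. \<integral>\<^sup>+u. h v (G (y, u)) \<partial>U \<partial>p \<partial>q)"
    by (subst PQ.nn_integral_snd[symmetric]) (simp_all add: h_def)
  also have "\<dots> = (\<integral>\<^sup>+v. \<integral>\<^sup>+z. h v (G z) \<partial>PU \<partial>q)"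
    by (intro nn_integral_cong U.nn_integral_fst) (simp add: h_def)
  also have "\<dots> = (\<integral>\<^sup>+v. \<integral>\<^sup>+x. h v x \<partial>N \<partial>q)"
    unfolding distr_G[symmetric] by (intro nn_integral_cong, subst nn_integral_distr) (simp_all add: h_def)
  also have "\<dots> = (\<integral>\<^sup>+v. ennreal (sqrt D / \<sigma>) \<partial>q)"
    unfolding h_def using D by (intro nn_integral_cong nn_integral_N_exp_quadratic)
  finally show ?thesis by (simp add: h_def Q.emeasure_space_1)
qed

end

context gaussian_coupling
begin

lemma gaussian_reconstruction_error_ge:
  assumes p2: "integrable p (\<lambda>x. x\<^sup>2)" and jd: "joint_distr \<pi>" and fm: "distr \<pi> borel fst = p"
    and MI: "mutual_info \<pi> \<le> ereal r" and ic: "integrable \<pi> (\<lambda>x. (fst x - snd x)\<^sup>2)"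
  shows "\<sigma>\<^sup>2 * exp (-2 * r) \<le> (\<integral>\<omega>. (G (fst (fst \<omega>), snd \<omega>) - c - snd (fst \<omega>))\<^sup>2 \<partial>(\<pi> \<Otimes>\<^sub>M U))"
proof -
  define q where "q = distr \<pi> borel snd"
  obtain f where f [measurable]: "f \<in> borel_measurable (borel \<Otimes>\<^sub>M borel)" and f_nonneg: "\<And>x. 0 \<le> f x"
    and dens: "density (p \<Otimes>\<^sub>M q) (\<lambda>x. ennreal (f x)) = \<pi>"
    and il: "integrable \<pi> (\<lambda>x. ln (f x))" and le: "(\<integral>x. ln (f x) \<partial>\<pi>) \<le> r"
    using mutual_info_le_density[OF jd MI] unfolding fm q_def[symmetric] by blast
  interpret \<Pi>: prob_space \<pi> using jd by (simp add: joint_distr_def)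
  have s\<pi> [measurable_cong]: "sets \<pi> = sets (borel \<Otimes>\<^sub>M borel)" using jd by (simp add: joint_distr_def)
  have q: "prob_space q" "sets q = sets borel"
    unfolding q_def by (auto intro!: \<Pi>.prob_space_distr)
  have [measurable_cong]: "sets q = sets borel" by (rule q(2))
  define \<nu> where "\<nu> = (p \<Otimes>\<^sub>M q) \<Otimes>\<^sub>M U"
  have [measurable_cong]: "sets \<nu> = sets ((borel \<Otimes>\<^sub>M borel) \<Otimes>\<^sub>M borel)"
    unfolding \<nu>_def by (intro sets_pair_measure_cong) (simp_all add: q(2))
  have \<Omega>_eq: "\<pi> \<Otimes>\<^sub>M U = density \<nu> (\<lambda>\<omega>. ennreal (f (fst \<omega>)))"
    unfolding dens[symmetric] \<nu>_def using q P.prob_space_axioms prob_space_U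
    by (intro density_pair_measure_prob_space prob_space_imp_sigma_finite)
       (simp_all add: prob_space_pair pair_prob_space.intro)
  interpret \<Omega>: prob_space "\<pi> \<Otimes>\<^sub>M U"
    using prob_space_U by (simp add: prob_space_pair pair_prob_space.intro \<Pi>.prob_space_axioms)
  define X where "X \<omega> = G (fst (fst \<omega>), snd \<omega>)" for \<omega> :: "(real \<times> real) \<times> real"
  define V where "V \<omega> = snd (fst \<omega>)" for \<omega> :: "(real \<times> real) \<times> real"
  have [measurable]: "X \<in> borel_measurable ((borel \<Otimes>\<^sub>M borel) \<Otimes>\<^sub>M borel)"
    "V \<in> borel_measurable ((borel \<Otimes>\<^sub>M borel) \<Otimes>\<^sub>M borel)" unfolding X_def V_def by measurable
  have X2: "integrable (\<pi> \<Otimes>\<^sub>M U) (\<lambda>\<omega>. (X \<omega>)\<^sup>2)"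
    and varX: "(\<integral>\<omega>. (X \<omega> - \<mu>)\<^sup>2 \<partial>(\<pi> \<Otimes>\<^sub>M U)) = \<sigma>\<^sup>2"
    using integral_pair_U_G[OF jd fm, of "\<lambda>x. x\<^sup>2"] integral_pair_U_G[OF jd fm, of "\<lambda>x. (x - \<mu>)\<^sup>2"]
      integrable_N_square integral_N_centered_square by (simp_all add: X_def)
  have "integrable \<pi> (\<lambda>x. (snd x)\<^sup>2)"
  proof -
    have "integrable \<pi> (\<lambda>x. (fst x)\<^sup>2)"
      using p2 fm integrable_distr_eq[of fst \<pi> borel "\<lambda>x. x\<^sup>2"] by simp
    from \<Pi>.integrable_square_lincomb[OF _ _ this ic, of 1 "-1" 0] show ?thesis by simp
  qed
  hence V2: "integrable (\<pi> \<Otimes>\<^sub>M U) (\<lambda>\<omega>. (V \<omega>)\<^sup>2)"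
    using integrable_pair_fst(1)[OF prob_space_U, of "\<lambda>x. (snd x)\<^sup>2" \<pi>] by (simp add: V_def)
  have ilog: "integrable (\<pi> \<Otimes>\<^sub>M U) (\<lambda>\<omega>. ln (f (fst \<omega>)))"
    and intlog: "(\<integral>\<omega>. ln (f (fst \<omega>)) \<partial>(\<pi> \<Otimes>\<^sub>M U)) \<le> r"
    using integrable_pair_fst[OF prob_space_U, of "\<lambda>x. ln (f x)" \<pi>] il le by simp_all
  define D where "D = \<sigma>\<^sup>2 * exp (-2 * r)"
  have "exp (-2 * r) = (exp (-r))\<^sup>2" by (simp add: power2_eq_square flip: exp_add)
  hence D: "D > 0" "sqrt D = \<sigma> * exp (-r)"
    using \<sigma>_pos by (simp_all add: D_def real_sqrt_mult)
  define e where "e = (\<integral>\<omega>. (X \<omega> - c - V \<omega>)\<^sup>2 \<partial>(\<pi> \<Otimes>\<^sub>M U))"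
  define H where "H \<omega> = (X \<omega> - \<mu>)\<^sup>2 / (2 * \<sigma>\<^sup>2) - (X \<omega> - (c + V \<omega>))\<^sup>2 / (2 * D)" for \<omega>
  have iX: "integrable (\<pi> \<Otimes>\<^sub>M U) (\<lambda>\<omega>. (X \<omega> - \<mu>)\<^sup>2)"
    using \<Omega>.integrable_square_lincomb[OF _ _ X2 X2, of 1 0 "-\<mu>"] by simp
  have iE: "integrable (\<pi> \<Otimes>\<^sub>M U) (\<lambda>\<omega>. (X \<omega> - (c + V \<omega>))\<^sup>2)"
    using \<Omega>.integrable_square_lincomb[OF _ _ X2 V2, of 1 "-1" "-c"] by (simp add: algebra_simps)
  have "(\<integral>\<omega>. H \<omega> \<partial>(\<pi> \<Otimes>\<^sub>M U)) - ln (sqrt D / \<sigma>) \<le> (\<integral>\<omega>. ln (f (fst \<omega>)) \<partial>(\<pi> \<Otimes>\<^sub>M U))"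
    unfolding \<Omega>_eq
  proof (rule donsker_varadhan_le)
    show "(\<integral>\<^sup>+\<omega>. ennreal (exp (H \<omega>)) \<partial>\<nu>) \<le> ennreal (sqrt D / \<sigma>)"
      using nn_integral_exp_log_likelihood_ratio[OF q D(1), of c]
      by (simp add: H_def X_def V_def \<nu>_def)
    show "prob_space (density \<nu> (\<lambda>\<omega>. ennreal (f (fst \<omega>))))" using \<Omega>_eq \<Omega>.prob_space_axioms by simp
    show "integrable (density \<nu> (\<lambda>\<omega>. ennreal (f (fst \<omega>)))) H"
      using iX iE unfolding \<Omega>_eq[symmetric] H_def by simp
    show "integrable (density \<nu> (\<lambda>\<omega>. ennreal (f (fst \<omega>)))) (\<lambda>\<omega>. ln (f (fst \<omega>)))"
      using ilog unfolding \<Omega>_eq[symmetric] .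
  qed (use D \<sigma>_pos f_nonneg in \<open>simp_all add: H_def\<close>)
  moreover have "(\<integral>\<omega>. H \<omega> \<partial>(\<pi> \<Otimes>\<^sub>M U)) = 1/2 - e / (2 * D)"
    using iX iE varX \<sigma>_pos by (simp add: H_def e_def algebra_simps)
  moreover have "ln (sqrt D / \<sigma>) = - r" using \<sigma>_pos by (simp add: D(2) ln_mult ln_div)
  ultimately have "1/2 - e / (2 * D) \<le> 0" using intlog by linarith
  hence "D \<le> e" using D(1) by (simp add: field_simps)
  thus ?thesis by (simp add: D_def e_def X_def V_def)
qed

end

context gaussian_coupling
begin

lemma gaussian_distortion_bound:
  assumes p2: "integrable p (\<lambda>x. x\<^sup>2)" and jd: "joint_distr \<pi>" and fm: "distr \<pi> borel fst = p"
    and MI: "mutual_info \<pi> \<le> ereal r" and ic: "integrable \<pi> (\<lambda>x. (fst x - snd x)\<^sup>2)"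
  shows "\<sigma> * exp (-r) \<le> sqrt (\<integral>z. (G z - fst z - c)\<^sup>2 \<partial>PU) + sqrt (\<integral>x. (fst x - snd x)\<^sup>2 \<partial>\<pi>)"
proof -
  interpret \<Omega>: prob_space "\<pi> \<Otimes>\<^sub>M U"
    using jd prob_space_U by (simp add: joint_distr_def prob_space_pair pair_prob_space.intro)
  have s\<pi> [measurable_cong]: "sets \<pi> = sets (borel \<Otimes>\<^sub>M borel)" using jd by (simp add: joint_distr_def)
  define \<phi> where "\<phi> \<omega> = (fst (fst \<omega>), snd \<omega>)" for \<omega> :: "(real \<times> real) \<times> real"
  have \<phi>: "\<phi> \<in> measurable (\<pi> \<Otimes>\<^sub>M U) (borel \<Otimes>\<^sub>M U)" unfolding \<phi>_def by measurable
  have [measurable]: "\<phi> \<in> measurable ((borel \<Otimes>\<^sub>M borel) \<Otimes>\<^sub>M borel) (borel \<Otimes>\<^sub>M borel)"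
    unfolding \<phi>_def by measurable
  define A where "A \<omega> = G (\<phi> \<omega>) - fst (\<phi> \<omega>) - c" for \<omega>
  define B where "B \<omega> = fst (fst \<omega>) - snd (fst \<omega>)" for \<omega> :: "(real \<times> real) \<times> real"
  have [measurable]: "A \<in> borel_measurable (\<pi> \<Otimes>\<^sub>M U)" "B \<in> borel_measurable (\<pi> \<Otimes>\<^sub>M U)"
    unfolding A_def B_def by measurable
  have PU_eq: "distr (\<pi> \<Otimes>\<^sub>M U) (borel \<Otimes>\<^sub>M U) \<phi> = PU"
    unfolding \<phi>_def[abs_def] by (rule distr_pair_U_eq_PU[OF jd fm])
  have "integrable PU (\<lambda>z. (G z - fst z - c)\<^sup>2)"
    using integrable_G_square integrable_fst_square[OF p2] by (intro PU.integrable_square_diff) auto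
  hence A2: "integrable (\<pi> \<Otimes>\<^sub>M U) (\<lambda>\<omega>. (A \<omega>)\<^sup>2)"
    and intA: "(\<integral>\<omega>. (A \<omega>)\<^sup>2 \<partial>(\<pi> \<Otimes>\<^sub>M U)) = (\<integral>z. (G z - fst z - c)\<^sup>2 \<partial>PU)"
    using integrable_distr_eq[OF \<phi>, of "\<lambda>z. (G z - fst z - c)\<^sup>2"]
      integral_distr[OF \<phi>, of "\<lambda>z. (G z - fst z - c)\<^sup>2"] by (simp_all add: PU_eq A_def)
  have B2: "integrable (\<pi> \<Otimes>\<^sub>M U) (\<lambda>\<omega>. (B \<omega>)\<^sup>2)"
    and intB: "(\<integral>\<omega>. (B \<omega>)\<^sup>2 \<partial>(\<pi> \<Otimes>\<^sub>M U)) = (\<integral>x. (fst x - snd x)\<^sup>2 \<partial>\<pi>)"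
    using integrable_pair_fst[OF prob_space_U, of "\<lambda>x. (fst x - snd x)\<^sup>2" \<pi>] ic by (simp_all add: B_def)
  have "exp (-2 * r) = (exp (-r))\<^sup>2" by (simp add: power2_eq_square flip: exp_add)
  hence "\<sigma> * exp (-r) = sqrt (\<sigma>\<^sup>2 * exp (-2 * r))" using \<sigma>_pos by (simp add: real_sqrt_mult)
  also have "\<dots> \<le> sqrt (\<integral>\<omega>. (A \<omega> + B \<omega>)\<^sup>2 \<partial>(\<pi> \<Otimes>\<^sub>M U))"
    using gaussian_reconstruction_error_ge[OF p2 jd fm MI ic, of c]
    by (simp add: A_def B_def \<phi>_def algebra_simps)
  also have "\<dots> \<le> sqrt (\<integral>\<omega>. (A \<omega>)\<^sup>2 \<partial>(\<pi> \<Otimes>\<^sub>M U)) + sqrt (\<integral>\<omega>. (B \<omega>)\<^sup>2 \<partial>(\<pi> \<Otimes>\<^sub>M U))"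
    using A2 B2 by (intro \<Omega>.sqrt_integral_square_add_le) simp_all
  finally show ?thesis by (simp only: intA intB)
qed

end

theorem lemma4:
  fixes \<mu>X \<sigma>X R Rc P :: real and pXh :: "real measure"
  assumes "\<sigma>X > 0" and "R \<ge> 0" and "Rc \<ge> 0" and "P \<ge> 0"
    and "real_distr pXh"
    and "integrable pXh (\<lambda>x. x\<^sup>2)"
    and "W2sq (gaussian \<mu>X \<sigma>X) pXh \<le> P"
  shows "distortion_rate (R + Rc) pXh \<ge>
    (max 0 (\<sigma>X * exp (-(R + Rc)) - sqrt (P - (\<mu>X - (\<integral>x. x \<partial>pXh))\<^sup>2)))\<^sup>2"
proof -
  interpret gaussian_coupling \<mu>X \<sigma>X pXh
    using assms(1,5) by (simp add: gaussian_coupling_def gaussian_law_def real_law_def)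
  define c where "c = \<mu>X - (\<integral>x. x \<partial>pXh)"
  have "(\<integral>z. (G z - fst z - c)\<^sup>2 \<partial>PU) \<le> P - c\<^sup>2"
    using integral_G_fst_centered_square_le[OF assms(6) c_def] assms(7) by simp
  hence s: "sqrt (\<integral>z. (G z - fst z - c)\<^sup>2 \<partial>PU) \<le> sqrt (P - c\<^sup>2)" by simp
  show ?thesis
    unfolding c_def[symmetric]
  proof (rule le_distortion_rate[OF assms(5,6)])
    show "0 \<le> R + Rc" using assms(2,3) by simp
    fix \<pi> assume "joint_distr \<pi>" "distr \<pi> borel fst = pXh" "mutual_info \<pi> \<le> ereal (R + Rc)"
      "integrable \<pi> (\<lambda>x. (fst x - snd x)\<^sup>2)"
    note gaussian_distortion_bound[OF assms(6) this, of c]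
    moreover have "0 \<le> sqrt (\<integral>x. (fst x - snd x)\<^sup>2 \<partial>\<pi>)" by simp
    ultimately have "max 0 (\<sigma>X * exp (-(R + Rc)) - sqrt (P - c\<^sup>2)) \<le> sqrt (\<integral>x. (fst x - snd x)\<^sup>2 \<partial>\<pi>)"
      using s by (intro max.boundedI) linarith+
    from power_mono[OF this, of 2] show "(max 0 (\<sigma>X * exp (-(R + Rc)) - sqrt (P - c\<^sup>2)))\<^sup>2
        \<le> (\<integral>x. (fst x - snd x)\<^sup>2 \<partial>\<pi>)" by simp
  qed
qed

end
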